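(* Let $H\in\mathbb{R}^{n\times d}$, $\Sigma\in\mathbb{R}^{n\times n}$ symmetric positive definite, $y\in\mathbb{R}^n$, $J\ge2$, and a fixed initial ensemble $v_0^{(1)},\dots,v_0^{(J)}$. Run stochastic EKI: $$v_{i+1}^{(j)}=v_i^{(j)}+\Gamma_iH^\top(H\Gamma_iH^\top+\Sigma)^{-1}(y+\varepsilon_i^{(j)}-Hv_i^{(j)}),$$ where $\Gamma_i$ is the empirical covariance of $v_i^{(1:J)}$ and $\varepsilon_i^{(j)}$ are i.i.d. $\mathcal{N}(0,\Sigma)$. Define $C_0=H\Gamma_0H^\top$, $C_{i+1}=\Sigma-\Sigma(C_i+\Sigma)^{-1}\Sigma$. Then for all $i\ge0$, $\mathbb{E}[H\Gamma_iH^\top]\le C_i$ in the Löwner order.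
   Context: $\Gamma_i=\frac1{J-1}\sum_j(v_i^{(j)}-\bar v_i)(v_i^{(j)}-\bar v_i)^\top$, $\bar v_i=\frac1J\sum_jv_i^{(j)}$. Löwner order: $A\le B$ iff $B-A$ is positive semidefinite. Expectation is over all perturbations $\varepsilon$. *)

theory Defs
  imports "HOL-Probability.Probability"
begin

definition outer :: "real^'a \<Rightarrow> real^'b \<Rightarrow> real^'b^'a" where
  "outer u w = (\<chi> i k. u $ i * w $ k)"

definition ens_mean :: "nat \<Rightarrow> (nat \<Rightarrow> real^'d) \<Rightarrow> real^'d" where
  "ens_mean J v = (1 / real J) *\<^sub>R (\<Sum>j<J. v j)"

definition emp_cov :: "nat \<Rightarrow> (nat \<Rightarrow> real^'d) \<Rightarrow> real^'d^'d" where
  "emp_cov J v = (1 / (real J - 1)) *\<^sub>R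
     (\<Sum>j<J. outer (v j - ens_mean J v) (v j - ens_mean J v))"

text \<open>Stochastic EKI ensemble at step i, for a given realisation e i j of the perturbations.\<close>
primrec eki_ens :: "real^'d^'n \<Rightarrow> real^'n^'n \<Rightarrow> real^'n \<Rightarrow> nat \<Rightarrow> (nat \<Rightarrow> real^'d)
    \<Rightarrow> (nat \<Rightarrow> nat \<Rightarrow> real^'n) \<Rightarrow> nat \<Rightarrow> (nat \<Rightarrow> real^'d)" where
  "eki_ens H S y J v0 e 0 = v0"
| "eki_ens H S y J v0 e (Suc i) =
     (let v = eki_ens H S y J v0 e i; G = emp_cov J v
      in (\<lambda>j. v j + (G ** transpose H ** matrix_inv (H ** G ** transpose H + S))
                     *v (y + e i j - H *v v j)))"

primrec Cseq :: "real^'d^'n \<Rightarrow> real^'n^'n \<Rightarrow> real^'d^'d \<Rightarrow> nat \<Rightarrow> real^'n^'n" where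
  "Cseq H S G0 0 = H ** G0 ** transpose H"
| "Cseq H S G0 (Suc i) = S - S ** matrix_inv (Cseq H S G0 i + S) ** S"

definition sym_posdef :: "real^'n^'n \<Rightarrow> bool" where
  "sym_posdef S \<longleftrightarrow> transpose S = S \<and> (\<forall>x. x \<noteq> 0 \<longrightarrow> 0 < x \<bullet> (S *v x))"

definition pos_semidef :: "real^'n^'n \<Rightarrow> bool" where
  "pos_semidef S \<longleftrightarrow> transpose S = S \<and> (\<forall>x. 0 \<le> x \<bullet> (S *v x))"

definition loewner_le :: "real^'n^'n \<Rightarrow> real^'n^'n \<Rightarrow> bool" where
  "loewner_le A B \<longleftrightarrow> pos_semidef (B - A)"

definition gaussian :: "real^'n^'n \<Rightarrow> (real^'n) measure" where
  "gaussian S = density lborel (\<lambda>x. ennreal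
      (exp (- (x \<bullet> (matrix_inv S *v x)) / 2) / sqrt ((2 * pi) ^ CARD('n) * det S)))"

end

theory Submission
  imports Defs
begin

text \<open>
  Write \<open>C = H \<Gamma> H\<^sup>T\<close>. In observation space one EKI step moves each deviation \<open>d\<^sub>j\<close> to
  \<open>d\<^sub>j + G (\<epsilon>\<^sub>j - mean \<epsilon> - d\<^sub>j)\<close> with the Kalman gain \<open>G = C (C + \<Sigma>)\<inverse>\<close>. The new
  perturbations are centred, have covariance \<open>\<Sigma>\<close> and are independent of the current ensemble, so
  the conditional expectation of the next \<open>C\<close> is at most \<open>R(C) = \<Sigma> - \<Sigma> (C + \<Sigma>)\<inverse> \<Sigma>\<close>. Each quadratic form
  \<open>x\<^sup>T R(C) x\<close> is a minimum of functions affine in \<open>C\<close>, so \<open>R\<close> is concave and monotone in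
  the Loewner order, and Jensen's inequality together with induction on \<open>i\<close> gives
  \<open>E[H \<Gamma>\<^sub>i H\<^sup>T] \<le> C\<^sub>i\<close>. Integrability comes from the Kalman structure: all random
  coefficients of a step are bounded uniformly in the (unbounded) ensemble.
\<close>

section \<open>Symmetric and positive definite matrices\<close>

lemma inner_matrix_vector_transpose:
  "((A::real^'m^'n) *v x) \<bullet> y = x \<bullet> (transpose A *v y)"
  using dot_lmul_matrix[of x "transpose A" y] by simp

lemma inner_matrix_vector_sym:
  "transpose A = A \<Longrightarrow> ((A::real^'n^'n) *v x) \<bullet> y = x \<bullet> (A *v y)"
  using inner_matrix_vector_transpose[of A x y] by simp

lemma matrix_entry_inner_axis: "(A::real^'m^'n) $ a $ b = axis a 1 \<bullet> (A *v axis b 1)"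
proof -
  have "(A *v axis b 1) $ a = A $ a $ b"
    unfolding matrix_vector_mult_def axis_def by (simp add: if_distrib cong: if_cong)
  then show ?thesis
    by (simp add: inner_axis')
qed

lemma matrix_vector_mult_sum: "(A::real^'m^'n) *v (\<Sum>j\<in>F. w j) = (\<Sum>j\<in>F. A *v w j)"
  by (induction F rule: infinite_finite_induct) (simp_all add: matrix_vector_right_distrib)

lemma matrix_inv_right: "invertible A \<Longrightarrow> A ** matrix_inv A = mat 1"
  and matrix_inv_left: "invertible A \<Longrightarrow> matrix_inv A ** A = mat 1"
  for A :: "real^'n^'n"
  unfolding invertible_def matrix_inv_def by (metis (mono_tags, lifting) someI_ex)+

lemma matrix_inv_vector_right: "invertible A \<Longrightarrow> A *v (matrix_inv A *v x) = x"
  and matrix_inv_vector_left: "invertible A \<Longrightarrow> matrix_inv A *v (A *v x) = x"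
  for A :: "real^'n^'n"
  by (simp_all add: matrix_vector_mul_assoc matrix_inv_right matrix_inv_left)

lemma matrix_inv_sym:
  fixes A :: "real^'n^'n"
  assumes "invertible A" "transpose A = A"
  shows "transpose (matrix_inv A) = matrix_inv A"
proof -
  have left: "transpose (matrix_inv A) ** A = mat 1"
    using matrix_inv_right[OF assms(1)] assms(2) by (metis matrix_transpose_mul transpose_mat)
  have "transpose (matrix_inv A) = transpose (matrix_inv A) ** (A ** matrix_inv A)"
    by (simp add: matrix_inv_right[OF assms(1)])
  also have "\<dots> = matrix_inv A"
    by (simp only: matrix_mul_assoc left matrix_mul_lid)
  finally show ?thesis .
qed

lemma invertible_if_pos_def:
  fixes A :: "real^'n^'n"
  assumes "\<And>x. x \<noteq> 0 \<Longrightarrow> 0 < x \<bullet> (A *v x)"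
  shows "invertible A"
proof -
  have "A *v x = 0 \<Longrightarrow> x = 0" for x
    using assms[of x] by auto
  then show ?thesis
    using matrix_left_invertible_ker invertible_left_inverse by blast
qed

lemma sym_posdef_sym: "sym_posdef S \<Longrightarrow> transpose S = S"
  unfolding sym_posdef_def by simp

lemma sym_posdef_invertible: "sym_posdef S \<Longrightarrow> invertible S"
  unfolding sym_posdef_def by (blast intro: invertible_if_pos_def)

lemma sym_posdef_pos_semidef: "sym_posdef S \<Longrightarrow> pos_semidef S"
  unfolding sym_posdef_def pos_semidef_def by (metis inner_zero_left order.refl less_imp_le)

lemma pos_semidef_add_sym_posdef:
  fixes C S :: "real^'n^'n"
  assumes "pos_semidef C" "sym_posdef S"
  shows "sym_posdef (C + S)"
proof -
  have "0 < x \<bullet> ((C + S) *v x)" if "x \<noteq> 0" for x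
  proof -
    have "0 \<le> x \<bullet> (C *v x)" "0 < x \<bullet> (S *v x)"
      using assms that unfolding pos_semidef_def sym_posdef_def by auto
    then show ?thesis by (simp add: matrix_vector_mult_add_rdistrib inner_add_right)
  qed
  moreover have "transpose (C + S) = C + S"
    using assms unfolding pos_semidef_def sym_posdef_def by (simp add: transpose_def vec_eq_iff)
  ultimately show ?thesis unfolding sym_posdef_def by blast
qed

lemma pos_semidef_matrix_inv:
  fixes A :: "real^'n^'n"
  assumes "sym_posdef A"
  shows "pos_semidef (matrix_inv A)"
  unfolding pos_semidef_def
proof
  have inv: "invertible A"
    by (rule sym_posdef_invertible[OF assms])
  show "transpose (matrix_inv A) = matrix_inv A"
    by (rule matrix_inv_sym[OF inv sym_posdef_sym[OF assms]])
  show "\<forall>y. 0 \<le> y \<bullet> (matrix_inv A *v y)"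
  proof
    fix y
    define w where "w = matrix_inv A *v y"
    have "y \<bullet> w = w \<bullet> (A *v w)"
      unfolding w_def by (simp add: matrix_inv_vector_right[OF inv] inner_commute)
    then show "0 \<le> y \<bullet> (matrix_inv A *v y)"
      using sym_posdef_pos_semidef[OF assms] unfolding pos_semidef_def w_def by simp
  qed
qed

lemma matrix_inv_quadratic_lower_bound:
  fixes A :: "real^'n^'n"
  assumes "invertible A" "pos_semidef A"
  shows "2 * (z \<bullet> w) - w \<bullet> (A *v w) \<le> z \<bullet> (matrix_inv A *v z)"
proof -
  define u where "u = matrix_inv A *v z"
  have Au: "A *v u = z"
    unfolding u_def by (rule matrix_inv_vector_right[OF assms(1)])
  have sym: "transpose A = A" and psd: "0 \<le> (u - w) \<bullet> (A *v (u - w))"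
    using assms(2) unfolding pos_semidef_def by auto
  have "(u - w) \<bullet> (A *v (u - w)) = u \<bullet> (A *v u) - 2 * (w \<bullet> (A *v u)) + w \<bullet> (A *v w)"
    using inner_matrix_vector_sym[OF sym, of w u]
    by (simp add: matrix_vector_mult_diff_distrib inner_diff_left inner_diff_right inner_commute)
  with psd show ?thesis
    using Au unfolding u_def by (simp add: inner_commute)
qed

lemma sym_posdef_cauchy_schwarz:
  fixes S :: "real^'n^'n"
  assumes "sym_posdef S"
  shows "(b \<bullet> w)\<^sup>2 \<le> (b \<bullet> (S *v b)) * (w \<bullet> (matrix_inv S *v w))"
proof (cases "b = 0")
  case False
  then have pos: "0 < b \<bullet> (S *v b)"
    using assms unfolding sym_posdef_def by blast
  define t where "t = (b \<bullet> w) / (b \<bullet> (S *v b))"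
  have "2 * (w \<bullet> (t *\<^sub>R b)) - (t *\<^sub>R b) \<bullet> (S *v (t *\<^sub>R b)) \<le> w \<bullet> (matrix_inv S *v w)"
    by (rule matrix_inv_quadratic_lower_bound[OF sym_posdef_invertible sym_posdef_pos_semidef, OF assms assms])
  then have "(b \<bullet> w)\<^sup>2 / (b \<bullet> (S *v b)) \<le> w \<bullet> (matrix_inv S *v w)"
    using pos by (simp add: t_def matrix_vector_mult_scaleR power2_eq_square inner_commute)
  then show ?thesis
    using pos by (simp add: pos_divide_le_eq mult.commute)
qed simp

lemma transpose_diff: "transpose (A - B) = transpose A - (transpose B :: 'a::ab_group_add^'n^'m)"
  by (simp add: transpose_def vec_eq_iff)

section \<open>The Riccati map\<close>

definition riccati :: "real^'n^'n \<Rightarrow> real^'n^'n \<Rightarrow> real^'n^'n" where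
  "riccati S C = S - S ** matrix_inv (C + S) ** S"

lemma Cseq_Suc_riccati: "Cseq H S G0 (Suc i) = riccati S (Cseq H S G0 i)"
  by (simp add: riccati_def)

lemma quad_riccati:
  fixes S C :: "real^'n^'n"
  assumes "transpose S = S"
  shows "x \<bullet> (riccati S C *v x) = x \<bullet> (S *v x) - (S *v x) \<bullet> (matrix_inv (C + S) *v (S *v x))"
proof -
  have "x \<bullet> ((S ** matrix_inv (C + S) ** S) *v x) = (S *v x) \<bullet> (matrix_inv (C + S) *v (S *v x))"
    using inner_matrix_vector_sym[OF assms, of x "matrix_inv (C + S) *v (S *v x)"]
    by (simp add: matrix_vector_mul_assoc[symmetric])
  then show ?thesis
    by (simp add: riccati_def matrix_vector_mult_diff_rdistrib inner_diff_right)
qed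

text \<open>With \<open>b = (C + S)\<inverse> C x\<close> one has \<open>x - b = (C + S)\<inverse> S x\<close>; this splits the
  quadratic form of \<open>riccati S C\<close> into a \<open>C\<close>-part and an \<open>S\<close>-part.\<close>

lemma quad_riccati_split:
  fixes C S :: "real^'n^'n"
  assumes C: "pos_semidef C" and S: "sym_posdef S"
    and b: "b = matrix_inv (C + S) *v (C *v x)"
  shows "x \<bullet> (riccati S C *v x) = (x - b) \<bullet> (C *v (x - b)) + b \<bullet> (S *v b)"
proof -
  note symS = sym_posdef_sym[OF S]
  have inv: "invertible (C + S)"
    by (rule sym_posdef_invertible[OF pos_semidef_add_sym_posdef[OF C S]])
  define p where "p = matrix_inv (C + S) *v (S *v x)"
  have pb: "p + b = x"
    unfolding p_def b
    by (metis matrix_inv_vector_left[OF inv] matrix_vector_mult_add_rdistrib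
        matrix_vector_right_distrib add.commute)
  have "C *v p + S *v p = S *v x"
    using matrix_inv_vector_right[OF inv, of "S *v x"]
    unfolding p_def by (simp add: matrix_vector_mult_add_rdistrib)
  then have Cp: "C *v p = S *v b"
    using pb by (metis add_diff_cancel_left' add_diff_cancel_right' matrix_vector_mult_diff_distrib)
  have "x - b = p"
    using pb by (simp add: algebra_simps)
  then have "(x - b) \<bullet> (C *v (x - b)) + b \<bullet> (S *v b) = (p + b) \<bullet> (S *v b)"
    using Cp by (simp add: inner_add_left)
  also have "\<dots> = (S *v x) \<bullet> b"
    using pb inner_matrix_vector_sym[OF symS, of x b] by simp
  also have "\<dots> = (S *v x) \<bullet> (x - p)"
    using pb by (metis add_diff_cancel_left')
  also have "\<dots> = x \<bullet> (riccati S C *v x)"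
    unfolding quad_riccati[OF symS] p_def by (simp add: inner_diff_right inner_commute)
  finally show ?thesis ..
qed

lemma quad_riccati_bounds:
  fixes C S :: "real^'n^'n"
  assumes C: "pos_semidef C" and S: "sym_posdef S"
  shows "0 \<le> x \<bullet> (riccati S C *v x)" "x \<bullet> (riccati S C *v x) \<le> x \<bullet> (S *v x)"
proof -
  define b where "b = matrix_inv (C + S) *v (C *v x)"
  show "0 \<le> x \<bullet> (riccati S C *v x)"
    unfolding quad_riccati_split[OF C S b_def]
    using C sym_posdef_pos_semidef[OF S] unfolding pos_semidef_def by (simp add: add_nonneg_nonneg)
  show "x \<bullet> (riccati S C *v x) \<le> x \<bullet> (S *v x)"
    using S pos_semidef_matrix_inv[OF pos_semidef_add_sym_posdef[OF C S]]
    unfolding quad_riccati[OF sym_posdef_sym[OF S]] pos_semidef_def by simp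
qed

lemma pos_semidef_riccati:
  fixes C S :: "real^'n^'n"
  assumes C: "pos_semidef C" and S: "sym_posdef S"
  shows "pos_semidef (riccati S C)"
proof -
  note symS = sym_posdef_sym[OF S]
  have "transpose (matrix_inv (C + S)) = matrix_inv (C + S)"
    using pos_semidef_matrix_inv[OF pos_semidef_add_sym_posdef[OF C S]]
    unfolding pos_semidef_def by simp
  then have "transpose (riccati S C) = riccati S C"
    by (simp add: riccati_def transpose_diff matrix_transpose_mul symS matrix_mul_assoc)
  then show ?thesis
    using quad_riccati_bounds(1)[OF C S] unfolding pos_semidef_def by blast
qed

lemma quad_riccati_le_affine:
  fixes C S :: "real^'n^'n"
  assumes C: "pos_semidef C" and S: "sym_posdef S"
  shows "x \<bullet> (riccati S C *v x) \<le> x \<bullet> (S *v x) - 2 * ((S *v x) \<bullet> u) + u \<bullet> ((C + S) *v u)"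
proof -
  have CS: "sym_posdef (C + S)"
    by (rule pos_semidef_add_sym_posdef[OF C S])
  show ?thesis
    using matrix_inv_quadratic_lower_bound[OF sym_posdef_invertible[OF CS]
        sym_posdef_pos_semidef[OF CS], of "S *v x" u]
    unfolding quad_riccati[OF sym_posdef_sym[OF S]] by simp
qed

lemma quad_riccati_eq_affine:
  fixes C S :: "real^'n^'n"
  assumes C: "pos_semidef C" and S: "sym_posdef S"
    and u: "u = matrix_inv (C + S) *v (S *v x)"
  shows "x \<bullet> (riccati S C *v x) = x \<bullet> (S *v x) - 2 * ((S *v x) \<bullet> u) + u \<bullet> ((C + S) *v u)"
proof -
  have "(C + S) *v u = S *v x"
    unfolding u by (rule matrix_inv_vector_right[OF sym_posdef_invertible[OF
          pos_semidef_add_sym_posdef[OF C S]]])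
  then show ?thesis
    unfolding quad_riccati[OF sym_posdef_sym[OF S]] u
    by (simp add: inner_commute)
qed

section \<open>Measurability of matrix operations\<close>

lemma borel_measurable_vec_nth [measurable (raw)]:
  fixes f :: "'x \<Rightarrow> 'a::euclidean_space^'n"
  shows "f \<in> borel_measurable M \<Longrightarrow> (\<lambda>x. f x $ i) \<in> borel_measurable M"
  by (rule borel_measurable_continuous_on[where f="\<lambda>v. v $ i"]) (auto intro: continuous_intros)

lemma borel_measurable_vec_lambda:
  assumes "\<And>i. (\<lambda>x. f x i) \<in> borel_measurable M"
  shows "(\<lambda>x. (\<chi> i. f x i) :: 'a::euclidean_space^'n) \<in> borel_measurable M"
proof (subst borel_measurable_euclidean_space, intro ballI)
  fix b :: "'a^'n"
  assume "b \<in> Basis"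
  then obtain i u where b: "b = axis i u" "u \<in> Basis"
    unfolding Basis_vec_def by auto
  show "(\<lambda>x. (\<chi> i. f x i) \<bullet> b) \<in> borel_measurable M"
    unfolding b inner_axis using assms[of i] by simp
qed

lemma borel_measurable_matrix_mult [measurable (raw)]:
  fixes f :: "'x \<Rightarrow> real^'m^'n" and g :: "'x \<Rightarrow> real^'p^'m"
  assumes [measurable]: "f \<in> borel_measurable M" "g \<in> borel_measurable M"
  shows "(\<lambda>x. f x ** g x) \<in> borel_measurable M"
  unfolding matrix_matrix_mult_def by (intro borel_measurable_vec_lambda) measurable

lemma borel_measurable_matrix_vector_mult [measurable (raw)]:
  fixes f :: "'x \<Rightarrow> real^'m^'n" and g :: "'x \<Rightarrow> real^'m"
  assumes [measurable]: "f \<in> borel_measurable M" "g \<in> borel_measurable M"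
  shows "(\<lambda>x. f x *v g x) \<in> borel_measurable M"
  unfolding matrix_vector_mult_def by (intro borel_measurable_vec_lambda) measurable

lemma borel_measurable_vector_matrix_mult [measurable (raw)]:
  fixes f :: "'x \<Rightarrow> real^'n" and g :: "'x \<Rightarrow> real^'m^'n"
  assumes [measurable]: "f \<in> borel_measurable M" "g \<in> borel_measurable M"
  shows "(\<lambda>x. f x v* g x) \<in> borel_measurable M"
  unfolding vector_matrix_mult_def by (intro borel_measurable_vec_lambda) measurable

lemma borel_measurable_outer [measurable (raw)]:
  fixes f :: "'x \<Rightarrow> real^'m" and g :: "'x \<Rightarrow> real^'n"
  assumes [measurable]: "f \<in> borel_measurable M" "g \<in> borel_measurable M"
  shows "(\<lambda>x. outer (f x) (g x)) \<in> borel_measurable M"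
  unfolding outer_def by (intro borel_measurable_vec_lambda) measurable

lemma borel_measurable_det [measurable (raw)]:
  fixes f :: "'x \<Rightarrow> real^'n^'n"
  assumes [measurable]: "f \<in> borel_measurable M"
  shows "(\<lambda>x. det (f x)) \<in> borel_measurable M"
  unfolding det_def by measurable

lemma matrix_inv_cramer:
  fixes A :: "real^'n^'n"
  assumes "invertible A"
  shows "matrix_inv A = (\<chi> r c. det (\<chi> i j. if j = r then axis c 1 $ i else A $ i $ j) / det A)"
proof -
  have "matrix_inv A $ r $ c = det (\<chi> i j. if j = r then axis c 1 $ i else A $ i $ j) / det A" for r c
  proof -
    have "A *v (matrix_inv A *v axis c 1) = axis c 1"
      by (rule matrix_inv_vector_right[OF assms])
    then have "(matrix_inv A *v axis c 1) $ r = det (\<chi> i j. if j = r then axis c 1 $ i else A $ i $ j) / det A"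
      using cramer[OF invertible_det_nz[THEN iffD1, OF assms]] by auto
    moreover have "(matrix_inv A *v axis c 1) $ r = matrix_inv A $ r $ c"
      by (simp add: matrix_vector_mult_def axis_def if_distrib cong: if_cong)
    ultimately show ?thesis by simp
  qed
  then show ?thesis by (simp add: vec_eq_iff)
qed

text \<open>\<open>matrix_inv\<close> is a choice operator; Cramer's rule exhibits it as a measurable
  function on the invertible matrices.\<close>

lemma borel_measurable_matrix_inv:
  fixes f :: "'x \<Rightarrow> real^'n^'n"
  assumes [measurable]: "f \<in> borel_measurable M" and "\<And>x. x \<in> space M \<Longrightarrow> invertible (f x)"
  shows "(\<lambda>x. matrix_inv (f x)) \<in> borel_measurable M"
proof -
  have "(\<lambda>x. if j = r then axis c 1 $ i else f x $ i $ j) \<in> borel_measurable M" for r c i j :: 'n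
    by (cases "j = r") simp_all
  then have "(\<lambda>x. (\<chi> r c. det (\<chi> i j. if j = r then axis c 1 $ i else f x $ i $ j) / det (f x))
      :: real^'n^'n) \<in> borel_measurable M"
    by (intro borel_measurable_vec_lambda borel_measurable_divide borel_measurable_det) simp_all
  then show ?thesis
    by (rule measurable_cong[THEN iffD1, rotated]) (simp add: matrix_inv_cramer assms(2))
qed

lemma borel_measurable_matrix_inv_add:
  fixes f :: "'x \<Rightarrow> real^'n^'n"
  assumes "f \<in> borel_measurable M" "\<And>x. pos_semidef (f x)" and "sym_posdef S"
  shows "(\<lambda>x. matrix_inv (f x + S)) \<in> borel_measurable M"
  using assms sym_posdef_invertible[OF pos_semidef_add_sym_posdef]
  by (intro borel_measurable_matrix_inv borel_measurable_add) auto

section \<open>Linear moments of a centred Gaussian vector\<close>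

lemma exp_plus_exp_minus_ge: "2 + t\<^sup>2 \<le> exp t + exp (- t)" for t :: real
proof -
  let ?f = "\<lambda>n. if even n then t ^ n /\<^sub>R fact n else 0"
  have "sum ?f {..<3} \<le> suminf ?f"
    using cosh_converges[of t] by (intro sum_le_suminf) (auto simp: sums_iff)
  then have "1 + t\<^sup>2 / 2 \<le> cosh t"
    using cosh_converges[of t] by (simp add: sums_iff eval_nat_numeral)
  then show ?thesis
    by (simp add: cosh_field_def)
qed

lemma exp_minus_one_le: "exp x - 1 \<le> x * exp x" for x :: real
proof -
  have "(1 - x) * exp x \<le> exp (- x) * exp x"
    using exp_ge_add_one_self[of "- x"] by (intro mult_right_mono) auto
  then show ?thesis
    by (simp add: mult_exp_exp algebra_simps)
qed

lemma abs_le_sqrt: "a\<^sup>2 \<le> c \<Longrightarrow> \<bar>a\<bar> \<le> sqrt c"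
  using real_sqrt_le_mono[of "a\<^sup>2" c] by simp

lemma le_tendsto_at_right:
  fixes a L x :: real
  assumes "(g \<longlongrightarrow> L) (at_right x)" and "\<And>s. x < s \<Longrightarrow> a \<le> g s"
  shows "a \<le> L"
proof (rule tendsto_lowerbound[OF assms(1)])
  show "\<forall>\<^sub>F s in at_right x. a \<le> g s"
    by (rule eventually_mono[OF eventually_at_right_less]) (rule assms(2))
qed simp

lemma sym_posdef_complete_square:
  fixes S :: "real^'n^'n"
  assumes "sym_posdef S"
  shows "(x - S *v u) \<bullet> (matrix_inv S *v (x - S *v u))
       = x \<bullet> (matrix_inv S *v x) - 2 * (u \<bullet> x) + u \<bullet> (S *v u)"
proof -
  note inv = sym_posdef_invertible[OF assms] and sym = sym_posdef_sym[OF assms]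
  have "(S *v u) \<bullet> (matrix_inv S *v x) = u \<bullet> x"
    using inner_matrix_vector_sym[OF sym, of u "matrix_inv S *v x"] matrix_inv_vector_right[OF inv]
    by simp
  then show ?thesis
    by (simp add: matrix_vector_mult_diff_distrib matrix_inv_vector_left[OF inv] inner_diff_left
        inner_diff_right inner_commute)
qed

lemma sym_posdef_gaussian_shift:
  fixes S :: "real^'n^'n"
  assumes "sym_posdef S"
  shows "exp (- (x \<bullet> (matrix_inv S *v x)) / 2) / N * exp (u \<bullet> x)
    = exp ((u \<bullet> (S *v u)) / 2) * (exp (- ((x - S *v u) \<bullet> (matrix_inv S *v (x - S *v u))) / 2) / N)"
proof -
  have "- (x \<bullet> (matrix_inv S *v x)) / 2 + u \<bullet> x
      = (u \<bullet> (S *v u)) / 2 + - ((x - S *v u) \<bullet> (matrix_inv S *v (x - S *v u))) / 2"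
    unfolding sym_posdef_complete_square[OF assms] by (simp add: field_simps)
  then have "exp (- (x \<bullet> (matrix_inv S *v x)) / 2) * exp (u \<bullet> x)
      = exp ((u \<bullet> (S *v u)) / 2) * exp (- ((x - S *v u) \<bullet> (matrix_inv S *v (x - S *v u))) / 2)"
    by (simp only: mult_exp_exp)
  then show ?thesis
    by simp
qed

context prob_space
begin

text \<open>The exponential moment is computed by completing the square in the density and
  using translation invariance of Lebesgue measure.\<close>

lemma gaussian_nn_mgf:
  fixes S :: "real^'n^'n" and X :: "'a \<Rightarrow> real^'n"
  assumes S: "sym_posdef S" and [measurable]: "X \<in> borel_measurable M"
    and D: "distr M borel X = gaussian S"
  shows "(\<integral>\<^sup>+\<omega>. ennreal (exp (u \<bullet> X \<omega>)) \<partial>M) = ennreal (exp ((u \<bullet> (S *v u)) / 2))"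
proof -
  define q where "q = u \<bullet> (S *v u)"
  define N where "N = sqrt ((2 * pi) ^ CARD('n) * det S)"
  define \<phi> where "\<phi> x = exp (- (x \<bullet> (matrix_inv S *v x)) / 2) / N" for x
  have G: "gaussian S = density lborel (\<lambda>x. ennreal (\<phi> x))"
    unfolding gaussian_def \<phi>_def N_def ..
  have [measurable]: "\<phi> \<in> borel_measurable borel"
    unfolding \<phi>_def by measurable
  have total: "(\<integral>\<^sup>+x. ennreal (\<phi> x) \<partial>lborel) = 1"
  proof -
    have "(\<integral>\<^sup>+x. ennreal (\<phi> x) \<partial>lborel) = emeasure (distr M borel X) (space (distr M borel X))"
      by (simp add: D G emeasure_density)
    also have "\<dots> = 1"
      by (rule prob_space.emeasure_space_1[OF prob_space_distr]) simp
    finally show ?thesis .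
  qed
  have "\<phi> x * exp (u \<bullet> x) = exp (q / 2) * \<phi> (x - S *v u)" for x
    unfolding \<phi>_def q_def by (rule sym_posdef_gaussian_shift[OF S])
  then have shift: "ennreal (\<phi> x) * ennreal (exp (u \<bullet> x)) = ennreal (exp (q / 2)) * ennreal (\<phi> (x - S *v u))"
    for x
    by (simp add: ennreal_mult''[symmetric] ennreal_mult'[symmetric])
  have "(\<integral>\<^sup>+\<omega>. ennreal (exp (u \<bullet> X \<omega>)) \<partial>M) = (\<integral>\<^sup>+x. ennreal (\<phi> x) * ennreal (exp (u \<bullet> x)) \<partial>lborel)"
  proof -
    have "(\<integral>\<^sup>+\<omega>. ennreal (exp (u \<bullet> X \<omega>)) \<partial>M) = (\<integral>\<^sup>+x. ennreal (exp (u \<bullet> x)) \<partial>distr M borel X)"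
      by (simp add: nn_integral_distr)
    then show ?thesis
      unfolding D G by (simp add: nn_integral_density)
  qed
  also have "\<dots> = (\<integral>\<^sup>+x. ennreal (exp (q / 2)) * ennreal (\<phi> (x - S *v u)) \<partial>lborel)"
    by (simp only: shift)
  also have "\<dots> = ennreal (exp (q / 2)) * (\<integral>\<^sup>+x. ennreal (\<phi> (x - S *v u)) \<partial>lborel)"
    by (rule nn_integral_cmult) measurable
  also have "(\<integral>\<^sup>+x. ennreal (\<phi> (x - S *v u)) \<partial>lborel) = (\<integral>\<^sup>+x. ennreal (\<phi> x) \<partial>lborel)"
    using nn_integral_distr[of "(+) (- (S *v u))" lborel borel "\<lambda>x. ennreal (\<phi> x)"]
    by (simp add: lborel_distr_plus)
  finally show ?thesis
    using total q_def by simp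
qed

lemma gaussian_mgf:
  fixes S :: "real^'n^'n" and X :: "'a \<Rightarrow> real^'n"
  assumes S: "sym_posdef S" and [measurable]: "X \<in> borel_measurable M"
    and D: "distr M borel X = gaussian S"
  shows "integrable M (\<lambda>\<omega>. exp (u \<bullet> X \<omega>))"
    and "expectation (\<lambda>\<omega>. exp (u \<bullet> X \<omega>)) = exp ((u \<bullet> (S *v u)) / 2)"
proof -
  note mgf = gaussian_nn_mgf[OF S _ D, of u]
  show int: "integrable M (\<lambda>\<omega>. exp (u \<bullet> X \<omega>))"
    by (rule integrableI_nonneg) (auto simp: mgf)
  show "expectation (\<lambda>\<omega>. exp (u \<bullet> X \<omega>)) = exp ((u \<bullet> (S *v u)) / 2)"
    using nn_integral_eq_integral[OF int] mgf by simp
qed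

lemma gaussian_linear_integrable:
  fixes S :: "real^'n^'n" and X :: "'a \<Rightarrow> real^'n"
  assumes S: "sym_posdef S" and X[measurable]: "X \<in> borel_measurable M"
    and D: "distr M borel X = gaussian S"
  shows "integrable M (\<lambda>\<omega>. u \<bullet> X \<omega>)" and "integrable M (\<lambda>\<omega>. (u \<bullet> X \<omega>)\<^sup>2)"
proof -
  have dom: "integrable M (\<lambda>\<omega>. exp (u \<bullet> X \<omega>) + exp (- (u \<bullet> X \<omega>)))"
    using gaussian_mgf(1)[OF S X D, of u] gaussian_mgf(1)[OF S X D, of "- u"] by simp
  have "\<bar>a\<bar> \<le> exp a + exp (- a)" for a :: real
    unfolding abs_le_iff using exp_ge_add_one_self[of a] exp_ge_add_one_self[of "- a"]
      exp_gt_zero[of a] exp_gt_zero[of "- a"] by linarith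
  then show "integrable M (\<lambda>\<omega>. u \<bullet> X \<omega>)"
    by (intro Bochner_Integration.integrable_bound[OF dom] AE_I2) auto
  have "a\<^sup>2 \<le> exp a + exp (- a)" for a :: real
    using exp_plus_exp_minus_ge[of a] by linarith
  then show "integrable M (\<lambda>\<omega>. (u \<bullet> X \<omega>)\<^sup>2)"
    by (intro Bochner_Integration.integrable_bound[OF dom] AE_I2) auto
qed

lemma gaussian_linear_exp_bounds:
  fixes S :: "real^'n^'n" and X :: "'a \<Rightarrow> real^'n"
  assumes S: "sym_posdef S" and X[measurable]: "X \<in> borel_measurable M"
    and D: "distr M borel X = gaussian S"
  shows "expectation (\<lambda>\<omega>. u \<bullet> X \<omega>) \<le> exp ((u \<bullet> (S *v u)) / 2) - 1"
    and "expectation (\<lambda>\<omega>. (u \<bullet> X \<omega>)\<^sup>2) \<le> 2 * exp ((u \<bullet> (S *v u)) / 2) - 2"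
proof -
  note mgf = gaussian_mgf[OF S X D] and int = gaussian_linear_integrable[OF S X D]
  have "expectation (\<lambda>\<omega>. u \<bullet> X \<omega>) \<le> expectation (\<lambda>\<omega>. exp (u \<bullet> X \<omega>) - 1)"
    using mgf(1)[of u] exp_ge_add_one_self by (intro integral_mono int) (auto simp: algebra_simps)
  then show "expectation (\<lambda>\<omega>. u \<bullet> X \<omega>) \<le> exp ((u \<bullet> (S *v u)) / 2) - 1"
    using mgf(1)[of u] mgf(2)[of u] by (simp add: prob_space)
  have "(- u) \<bullet> (S *v (- u)) = u \<bullet> (S *v u)"
    using matrix_vector_mult_scaleR[of S "- 1" u] by simp
  moreover have "a\<^sup>2 \<le> exp a + exp (- a) - 2" for a :: real
    using exp_plus_exp_minus_ge[of a] by linarith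
  then have "expectation (\<lambda>\<omega>. (u \<bullet> X \<omega>)\<^sup>2)
      \<le> expectation (\<lambda>\<omega>. exp (u \<bullet> X \<omega>) + exp ((- u) \<bullet> X \<omega>) - 2)"
    using mgf(1)[of u] mgf(1)[of "- u"] by (intro integral_mono int) auto
  ultimately show "expectation (\<lambda>\<omega>. (u \<bullet> X \<omega>)\<^sup>2) \<le> 2 * exp ((u \<bullet> (S *v u)) / 2) - 2"
    using mgf(1)[of u] mgf(1)[of "- u"] mgf(2)[of u] mgf(2)[of "- u"] by (simp add: prob_space)
qed

text \<open>Apply these bounds to \<open>s u\<close> and let \<open>s \<rightarrow> 0+\<close>.\<close>

lemma gaussian_linear_mean:
  fixes S :: "real^'n^'n" and X :: "'a \<Rightarrow> real^'n"
  assumes S: "sym_posdef S" and X[measurable]: "X \<in> borel_measurable M"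
    and D: "distr M borel X = gaussian S"
  shows "expectation (\<lambda>\<omega>. u \<bullet> X \<omega>) = 0"
proof -
  have le: "expectation (\<lambda>\<omega>. v \<bullet> X \<omega>) \<le> 0" for v
  proof -
    define q where "q = v \<bullet> (S *v v)"
    have "((\<lambda>s. s * q / 2 * exp (s\<^sup>2 * q / 2)) \<longlongrightarrow> 0 * q / 2 * exp (0\<^sup>2 * q / 2)) (at_right 0)"
      by (intro tendsto_intros) auto
    moreover have "expectation (\<lambda>\<omega>. v \<bullet> X \<omega>) \<le> s * q / 2 * exp (s\<^sup>2 * q / 2)" if "0 < s" for s
    proof -
      have "s * expectation (\<lambda>\<omega>. v \<bullet> X \<omega>) = expectation (\<lambda>\<omega>. (s *\<^sub>R v) \<bullet> X \<omega>)"
        by simp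
      also have "\<dots> \<le> exp (s\<^sup>2 * q / 2) - 1"
        using gaussian_linear_exp_bounds(1)[OF S X D, of "s *\<^sub>R v"]
        by (simp add: q_def matrix_vector_mult_scaleR power2_eq_square mult.assoc)
      also have "\<dots> \<le> s * (s * q / 2 * exp (s\<^sup>2 * q / 2))"
        using exp_minus_one_le[of "s\<^sup>2 * q / 2"] by (simp add: power2_eq_square mult_ac)
      finally show ?thesis
        using that by simp
    qed
    ultimately have "expectation (\<lambda>\<omega>. v \<bullet> X \<omega>) \<le> 0 * q / 2 * exp (0\<^sup>2 * q / 2)"
      by (rule le_tendsto_at_right)
    then show ?thesis
      by simp
  qed
  show ?thesis
    using le[of u] le[of "- u"] by simp
qed

lemma gaussian_linear_second_moment_le:
  fixes S :: "real^'n^'n" and X :: "'a \<Rightarrow> real^'n"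
  assumes S: "sym_posdef S" and X[measurable]: "X \<in> borel_measurable M"
    and D: "distr M borel X = gaussian S"
  shows "expectation (\<lambda>\<omega>. (u \<bullet> X \<omega>)\<^sup>2) \<le> u \<bullet> (S *v u)"
proof -
  define q where "q = u \<bullet> (S *v u)"
  have "((\<lambda>s. q * exp (s\<^sup>2 * q / 2)) \<longlongrightarrow> q * exp (0\<^sup>2 * q / 2)) (at_right 0)"
    by (intro tendsto_intros) auto
  moreover have "expectation (\<lambda>\<omega>. (u \<bullet> X \<omega>)\<^sup>2) \<le> q * exp (s\<^sup>2 * q / 2)" if "0 < s" for s
  proof -
    have "s\<^sup>2 * expectation (\<lambda>\<omega>. (u \<bullet> X \<omega>)\<^sup>2) = expectation (\<lambda>\<omega>. ((s *\<^sub>R u) \<bullet> X \<omega>)\<^sup>2)"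
      by (simp add: power_mult_distrib)
    also have "\<dots> \<le> 2 * (exp (s\<^sup>2 * q / 2) - 1)"
      using gaussian_linear_exp_bounds(2)[OF S X D, of "s *\<^sub>R u"]
      by (simp add: q_def matrix_vector_mult_scaleR power2_eq_square mult.assoc)
    also have "\<dots> \<le> s\<^sup>2 * (q * exp (s\<^sup>2 * q / 2))"
      using exp_minus_one_le[of "s\<^sup>2 * q / 2"] by simp
    finally show ?thesis
      using that by simp
  qed
  ultimately have "expectation (\<lambda>\<omega>. (u \<bullet> X \<omega>)\<^sup>2) \<le> q * exp (0\<^sup>2 * q / 2)"
    by (rule le_tendsto_at_right)
  then show ?thesis
    by (simp add: q_def)
qed

end

section \<open>One EKI step in observation space\<close>

definition obs_cov :: "real^'d^'n \<Rightarrow> nat \<Rightarrow> (nat \<Rightarrow> real^'d) \<Rightarrow> real^'n^'n" where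
  "obs_cov H J v = H ** emp_cov J v ** transpose H"

definition obs_dev :: "real^'d^'n \<Rightarrow> nat \<Rightarrow> (nat \<Rightarrow> real^'d) \<Rightarrow> nat \<Rightarrow> real^'n" where
  "obs_dev H J v j = H *v (v j - ens_mean J v)"

definition obs_gain :: "real^'d^'n \<Rightarrow> real^'n^'n \<Rightarrow> nat \<Rightarrow> (nat \<Rightarrow> real^'d) \<Rightarrow> real^'n^'n" where
  "obs_gain H S J v = obs_cov H J v ** matrix_inv (obs_cov H J v + S)"

definition eki_step :: "real^'d^'n \<Rightarrow> real^'n^'n \<Rightarrow> real^'n \<Rightarrow> nat \<Rightarrow> (nat \<Rightarrow> real^'d)
    \<Rightarrow> (nat \<Rightarrow> real^'n) \<Rightarrow> (nat \<Rightarrow> real^'d)" where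
  "eki_step H S y J v e = (\<lambda>j. v j +
     (emp_cov J v ** transpose H ** matrix_inv (obs_cov H J v + S)) *v (y + e j - H *v v j))"

lemma eki_ens_Suc: "eki_ens H S y J v0 e (Suc i) = eki_step H S y J (eki_ens H S y J v0 e i) (e i)"
  by (simp add: eki_step_def obs_cov_def Let_def)

lemma emp_cov_mult_vector:
  "emp_cov J v *v w = (1 / (real J - 1)) *\<^sub>R (\<Sum>j<J. ((v j - ens_mean J v) \<bullet> w) *\<^sub>R (v j - ens_mean J v))"
proof -
  define a where "a j = v j - ens_mean J v" for j
  have "(emp_cov J v *v w) $ i = (1 / (real J - 1)) * (\<Sum>j<J. (a j \<bullet> w) * a j $ i)" for i
  proof -
    have "(emp_cov J v *v w) $ i = (\<Sum>k\<in>UNIV. (1 / (real J - 1)) * (\<Sum>j<J. a j $ i * a j $ k) * w $ k)"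
      unfolding emp_cov_def outer_def matrix_vector_mult_def a_def by (simp add: sum_component)
    also have "\<dots> = (1 / (real J - 1)) * (\<Sum>j<J. \<Sum>k\<in>UNIV. a j $ i * a j $ k * w $ k)"
      by (subst sum.swap) (simp add: sum_distrib_left sum_distrib_right mult.assoc)
    also have "\<dots> = (1 / (real J - 1)) * (\<Sum>j<J. (a j \<bullet> w) * a j $ i)"
      by (simp add: inner_vec_def sum_distrib_left sum_distrib_right mult_ac)
    finally show ?thesis .
  qed
  then show ?thesis
    unfolding a_def[symmetric] by (simp add: vec_eq_iff sum_component)
qed

lemma quad_obs_cov:
  "x \<bullet> (obs_cov H J v *v z) = (1 / (real J - 1)) * (\<Sum>j<J. (x \<bullet> obs_dev H J v j) * (z \<bullet> obs_dev H J v j))"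
proof -
  define a where "a j = v j - ens_mean J v" for j
  have "a j \<bullet> (transpose H *v z) = z \<bullet> (H *v a j)" for j
    by (metis inner_matrix_vector_transpose inner_commute)
  then have "obs_cov H J v *v z = (1 / (real J - 1)) *\<^sub>R (\<Sum>j<J. (z \<bullet> obs_dev H J v j) *\<^sub>R obs_dev H J v j)"
    unfolding obs_cov_def obs_dev_def
    by (simp add: matrix_vector_mul_assoc[symmetric] emp_cov_mult_vector a_def[symmetric]
        matrix_vector_mult_scaleR matrix_vector_mult_sum)
  then show ?thesis
    by (simp add: inner_sum_right mult.commute)
qed

lemma transpose_emp_cov: "transpose (emp_cov J v) = emp_cov J v"
  by (simp add: emp_cov_def outer_def transpose_def vec_eq_iff sum_component mult.commute)

lemma pos_semidef_obs_cov: "pos_semidef (obs_cov H J v)"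
  unfolding pos_semidef_def
proof
  show "transpose (obs_cov H J v) = obs_cov H J v"
    by (simp add: obs_cov_def matrix_transpose_mul transpose_emp_cov matrix_mul_assoc)
  show "\<forall>x. 0 \<le> x \<bullet> (obs_cov H J v *v x)"
    by (cases "J = 0") (auto simp: quad_obs_cov intro!: divide_nonneg_nonneg sum_nonneg)
qed

lemma ens_mean_eki_step:
  assumes "J > 0"
  shows "ens_mean J (eki_step H S y J v e) = ens_mean J v +
    (emp_cov J v ** transpose H ** matrix_inv (obs_cov H J v + S)) *v (y + ens_mean J e - H *v ens_mean J v)"
proof -
  define T where "T = emp_cov J v ** transpose H ** matrix_inv (obs_cov H J v + S)"
  have "ens_mean J (eki_step H S y J v e)
      = ens_mean J v + (1 / real J) *\<^sub>R (\<Sum>j<J. T *v (y + e j - H *v v j))"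
    unfolding ens_mean_def eki_step_def T_def[symmetric] by (simp add: sum.distrib scaleR_add_right)
  also have "(1 / real J) *\<^sub>R (\<Sum>j<J. T *v (y + e j - H *v v j))
      = T *v ((1 / real J) *\<^sub>R (\<Sum>j<J. y + e j - H *v v j))"
    by (simp add: matrix_vector_mult_sum matrix_vector_mult_scaleR)
  also have "(1 / real J) *\<^sub>R (\<Sum>j<J. y + e j - H *v v j) = y + ens_mean J e - H *v ens_mean J v"
    using assms unfolding ens_mean_def
    by (simp add: sum.distrib sum_subtractf scaleR_add_right scaleR_diff_right
        matrix_vector_mult_sum[symmetric] matrix_vector_mult_scaleR sum_constant_scaleR del: sum_constant)
  finally show ?thesis
    unfolding T_def .
qed

lemma obs_dev_eki_step:
  assumes "J > 0"
  shows "obs_dev H J (eki_step H S y J v e) j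
    = obs_dev H J v j + obs_gain H S J v *v ((e j - ens_mean J e) - obs_dev H J v j)"
proof -
  define T where "T = emp_cov J v ** transpose H ** matrix_inv (obs_cov H J v + S)"
  have "eki_step H S y J v e j - ens_mean J (eki_step H S y J v e)
     = (v j - ens_mean J v) + T *v ((e j - ens_mean J e) - H *v (v j - ens_mean J v))"
    unfolding ens_mean_eki_step[OF assms] T_def[symmetric] unfolding eki_step_def T_def[symmetric]
    by (simp add: matrix_vector_mult_diff_distrib matrix_vector_right_distrib algebra_simps)
  moreover have "H ** T = obs_gain H S J v"
    unfolding T_def obs_gain_def obs_cov_def by (simp add: matrix_mul_assoc)
  ultimately show ?thesis
    unfolding obs_dev_def by (simp add: matrix_vector_right_distrib matrix_vector_mul_assoc)
qed

lemma inner_obs_dev_eki_step: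
  assumes "J > 0"
  shows "x \<bullet> obs_dev H J (eki_step H S y J v e) j
    = (x - x v* obs_gain H S J v) \<bullet> obs_dev H J v j + (x v* obs_gain H S J v) \<bullet> (e j - ens_mean J e)"
  unfolding obs_dev_eki_step[OF assms]
  by (simp add: dot_lmul_matrix inner_add_right inner_diff_left inner_diff_right
      matrix_vector_mult_diff_distrib)

lemma quad_obs_cov_eki_step:
  assumes "J > 0"
  shows "x \<bullet> (obs_cov H J (eki_step H S y J v e) *v x) = (1 / (real J - 1)) * (\<Sum>j<J.
    ((x - x v* obs_gain H S J v) \<bullet> obs_dev H J v j + (x v* obs_gain H S J v) \<bullet> (e j - ens_mean J e))\<^sup>2)"
  unfolding quad_obs_cov inner_obs_dev_eki_step[OF assms] by (simp add: power2_eq_square)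

lemma vector_mult_obs_gain:
  assumes "sym_posdef S"
  shows "x v* obs_gain H S J v = matrix_inv (obs_cov H J v + S) *v (obs_cov H J v *v x)"
proof -
  have "transpose (obs_cov H J v) = obs_cov H J v"
    using pos_semidef_obs_cov unfolding pos_semidef_def by blast
  moreover have "transpose (matrix_inv (obs_cov H J v + S)) = matrix_inv (obs_cov H J v + S)"
    using pos_semidef_matrix_inv[OF pos_semidef_add_sym_posdef[OF pos_semidef_obs_cov assms]]
    unfolding pos_semidef_def by blast
  ultimately show ?thesis
    unfolding obs_gain_def by (metis vector_matrix_mul_assoc vector_transpose_matrix)
qed

lemma quad_riccati_obs_cov:
  assumes "sym_posdef S"
  shows "x \<bullet> (riccati S (obs_cov H J v) *v x)
    = (1 / (real J - 1)) * (\<Sum>j<J. ((x - x v* obs_gain H S J v) \<bullet> obs_dev H J v j)\<^sup>2)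
      + (x v* obs_gain H S J v) \<bullet> (S *v (x v* obs_gain H S J v))"
  using quad_riccati_split[OF pos_semidef_obs_cov assms vector_mult_obs_gain[OF assms]]
  by (simp add: quad_obs_cov power2_eq_square)

text \<open>These bounds are uniform in the ensemble, which itself is unbounded; they make all
  random coefficients of the step formula integrable.\<close>

lemma obs_gain_bounds:
  assumes S: "sym_posdef S" and J: "J \<ge> 2"
  shows "j < J \<Longrightarrow> ((x - x v* obs_gain H S J v) \<bullet> obs_dev H J v j)\<^sup>2 \<le> (real J - 1) * (x \<bullet> (S *v x))"
    and "(x v* obs_gain H S J v) \<bullet> (S *v (x v* obs_gain H S J v)) \<le> x \<bullet> (S *v x)"
    and "((x v* obs_gain H S J v) $ c)\<^sup>2 \<le> (x \<bullet> (S *v x)) * (matrix_inv S $ c $ c)"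
proof -
  define b where "b = x v* obs_gain H S J v"
  define a where "a j = (x - b) \<bullet> obs_dev H J v j" for j
  have "0 \<le> b \<bullet> (S *v b)"
    using sym_posdef_pos_semidef[OF S] unfolding pos_semidef_def by blast
  moreover have "0 \<le> (\<Sum>j<J. (a j)\<^sup>2) / (real J - 1)"
    using J by (intro divide_nonneg_nonneg sum_nonneg) auto
  moreover have "(\<Sum>j<J. (a j)\<^sup>2) / (real J - 1) + b \<bullet> (S *v b) \<le> x \<bullet> (S *v x)"
    using quad_riccati_bounds(2)[OF pos_semidef_obs_cov S, of x H J v]
    unfolding quad_riccati_obs_cov[OF S] a_def b_def by simp
  ultimately have "(\<Sum>j<J. (a j)\<^sup>2) / (real J - 1) \<le> x \<bullet> (S *v x)"
    and b_le: "b \<bullet> (S *v b) \<le> x \<bullet> (S *v x)"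
    by linarith+
  then have sum_le: "(\<Sum>j<J. (a j)\<^sup>2) \<le> (real J - 1) * (x \<bullet> (S *v x))"
    using J by (simp add: pos_divide_le_eq mult.commute)
  show "j < J \<Longrightarrow> ((x - b) \<bullet> obs_dev H J v j)\<^sup>2 \<le> (real J - 1) * (x \<bullet> (S *v x))"
    using member_le_sum[of j "{..<J}" "\<lambda>j. (a j)\<^sup>2"] sum_le unfolding a_def by auto
  show "b \<bullet> (S *v b) \<le> x \<bullet> (S *v x)"
    by (rule b_le)
  have "(b $ c)\<^sup>2 \<le> (b \<bullet> (S *v b)) * (axis c 1 \<bullet> (matrix_inv S *v axis c 1))"
    using sym_posdef_cauchy_schwarz[OF S, of b "axis c 1"] by (simp add: inner_axis)
  also have "\<dots> \<le> (x \<bullet> (S *v x)) * (axis c 1 \<bullet> (matrix_inv S *v axis c 1))"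
    using pos_semidef_matrix_inv[OF S] b_le unfolding pos_semidef_def by (intro mult_right_mono) auto
  finally show "(b $ c)\<^sup>2 \<le> (x \<bullet> (S *v x)) * (matrix_inv S $ c $ c)"
    by (simp only: matrix_entry_inner_axis[symmetric])
qed

lemma Cseq_pos_semidef:
  assumes "sym_posdef S"
  shows "pos_semidef (Cseq H S (emp_cov J v0) i)"
proof (induction i)
  case 0
  show ?case
    using pos_semidef_obs_cov[of H J v0] by (simp add: obs_cov_def)
next
  case (Suc i)
  then show ?case
    unfolding Cseq_Suc_riccati by (rule pos_semidef_riccati[OF _ assms])
qed

section \<open>Ensembles as functions of the perturbations\<close>

lemma ens_mean_cong: "(\<And>j. j < J \<Longrightarrow> v j = w j) \<Longrightarrow> ens_mean J v = ens_mean J w"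
  unfolding ens_mean_def by (metis lessThan_iff sum.cong)

lemma emp_cov_cong: "(\<And>j. j < J \<Longrightarrow> v j = w j) \<Longrightarrow> emp_cov J v = emp_cov J w"
  unfolding emp_cov_def by (simp cong: ens_mean_cong)

lemma obs_cov_cong: "(\<And>j. j < J \<Longrightarrow> v j = w j) \<Longrightarrow> obs_cov H J v = obs_cov H J w"
  unfolding obs_cov_def by (simp cong: emp_cov_cong)

lemma obs_dev_cong: "(\<And>j. j < J \<Longrightarrow> v j = w j) \<Longrightarrow> j < J \<Longrightarrow> obs_dev H J v j = obs_dev H J w j"
  unfolding obs_dev_def by (simp cong: ens_mean_cong)

lemma eki_ens_cong:
  assumes "\<And>k l. k < i \<Longrightarrow> l < J \<Longrightarrow> e k l = e' k l" and "j < J"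
  shows "eki_ens H S y J v0 e i j = eki_ens H S y J v0 e' i j"
  using assms
proof (induction i arbitrary: j)
  case 0
  then show ?case by simp
next
  case (Suc i)
  then have "\<And>l. l < J \<Longrightarrow> eki_ens H S y J v0 e i l = eki_ens H S y J v0 e' i l"
    by simp
  with Suc.prems show ?case
    unfolding eki_ens_Suc eki_step_def by (simp cong: emp_cov_cong obs_cov_cong)
qed

lemma borel_measurable_ens_mean:
  assumes "\<And>j. j < J \<Longrightarrow> (\<lambda>x. f x j) \<in> borel_measurable N"
  shows "(\<lambda>x. ens_mean J (f x)) \<in> borel_measurable N"
  unfolding ens_mean_def using assms by (intro borel_measurable_scaleR borel_measurable_sum) auto

lemma borel_measurable_emp_cov:
  fixes f :: "'x \<Rightarrow> nat \<Rightarrow> real^'d"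
  assumes "\<And>j. j < J \<Longrightarrow> (\<lambda>x. f x j) \<in> borel_measurable N"
  shows "(\<lambda>x. emp_cov J (f x)) \<in> borel_measurable N"
  unfolding emp_cov_def using assms borel_measurable_ens_mean[OF assms]
  by (intro borel_measurable_scaleR borel_measurable_sum borel_measurable_outer borel_measurable_diff) auto

lemma borel_measurable_obs_cov:
  fixes f :: "'x \<Rightarrow> nat \<Rightarrow> real^'d"
  assumes "\<And>j. j < J \<Longrightarrow> (\<lambda>x. f x j) \<in> borel_measurable N"
  shows "(\<lambda>x. obs_cov H J (f x)) \<in> borel_measurable N"
  unfolding obs_cov_def using borel_measurable_emp_cov[OF assms] by measurable

lemma borel_measurable_obs_dev:
  fixes f :: "'x \<Rightarrow> nat \<Rightarrow> real^'d"
  assumes "\<And>j. j < J \<Longrightarrow> (\<lambda>x. f x j) \<in> borel_measurable N" and "j < J"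
  shows "(\<lambda>x. obs_dev H J (f x) j) \<in> borel_measurable N"
  unfolding obs_dev_def using assms borel_measurable_ens_mean[OF assms(1)]
  by (intro borel_measurable_matrix_vector_mult borel_measurable_diff) auto

section \<open>Matrix-valued integrals\<close>

lemma bounded_linear_quad: "bounded_linear (\<lambda>A::real^'n^'m. x \<bullet> (A *v z))"
proof -
  have "linear (\<lambda>A::real^'n^'m. x \<bullet> (A *v z))"
    by (rule linearI) (simp_all add: matrix_vector_mult_add_rdistrib inner_add_right
        scaleR_matrix_vector_assoc[symmetric])
  then show ?thesis
    by (simp add: linear_conv_bounded_linear)
qed

lemma
  fixes F :: "'a \<Rightarrow> real^'n^'m"
  assumes "integrable M F"
  shows integrable_quad: "integrable M (\<lambda>\<omega>. x \<bullet> (F \<omega> *v z))"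
    and quad_integral: "x \<bullet> (integral\<^sup>L M F *v z) = (\<integral>\<omega>. x \<bullet> (F \<omega> *v z) \<partial>M)"
  using integrable_bounded_linear[OF bounded_linear_quad assms, of x z]
    integral_bounded_linear[OF bounded_linear_quad assms, of x z] by simp_all

lemma matrix_entry_polar:
  fixes A :: "real^'n^'n"
  assumes "transpose A = A"
  shows "A $ a $ c = ((axis a 1 + axis c 1) \<bullet> (A *v (axis a 1 + axis c 1))
    - axis a 1 \<bullet> (A *v axis a 1) - axis c 1 \<bullet> (A *v axis c 1)) / 2"
proof -
  have "axis c 1 \<bullet> (A *v axis a 1) = axis a 1 \<bullet> (A *v axis c 1)"
    using inner_matrix_vector_sym[OF assms, of "axis a (1::real)" "axis c 1"] by (simp add: inner_commute)
  then show ?thesis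
    unfolding matrix_entry_inner_axis[of A a c]
    by (simp add: matrix_vector_right_distrib inner_add_left inner_add_right)
qed

lemma integrable_sym_matrixI:
  fixes F :: "'a \<Rightarrow> real^'n^'n"
  assumes "\<And>w. integrable M (\<lambda>\<omega>. w \<bullet> (F \<omega> *v w))" and "\<And>\<omega>. transpose (F \<omega>) = F \<omega>"
  shows "integrable M F"
proof -
  have "integrable M (\<lambda>\<omega>. F \<omega> \<bullet> b)" if "b \<in> Basis" for b
  proof -
    obtain a c where b: "b = axis a (axis c (1::real))"
      using \<open>b \<in> Basis\<close> unfolding Basis_vec_def by auto
    show ?thesis
      unfolding b inner_axis using assms by (simp add: matrix_entry_polar[OF assms(2)])
  qed
  then have "integrable M (\<lambda>\<omega>. \<Sum>b\<in>Basis. (F \<omega> \<bullet> b) *\<^sub>R b)"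
    by (intro Bochner_Integration.integrable_sum integrable_scaleR_left)
  then show ?thesis
    by (simp add: euclidean_representation)
qed

lemma transpose_integral_sym:
  fixes F :: "'a \<Rightarrow> real^'n^'n"
  assumes "integrable M F" and "\<And>\<omega>. transpose (F \<omega>) = F \<omega>"
  shows "transpose (integral\<^sup>L M F) = integral\<^sup>L M F"
proof -
  have "integral\<^sup>L M F $ a $ c = integral\<^sup>L M F $ c $ a" for a c
    unfolding matrix_entry_inner_axis[of "integral\<^sup>L M F"] quad_integral[OF assms(1)]
    using inner_matrix_vector_sym[OF assms(2)] by (simp add: inner_commute)
  then show ?thesis
    by (simp add: transpose_def vec_eq_iff)
qed

lemma loewner_leI:
  fixes A B :: "real^'n^'n"
  assumes "transpose A = A" "transpose B = B" and "\<And>x. x \<bullet> (A *v x) \<le> x \<bullet> (B *v x)"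
  shows "loewner_le A B"
  using assms unfolding loewner_le_def pos_semidef_def
  by (simp add: transpose_diff matrix_vector_mult_diff_rdistrib inner_diff_right)

text \<open>Jensen's inequality for the concave, monotone map \<open>riccati S\<close>: bound its quadratic form
  by the affine function of \<open>C\<close> that touches it at \<open>D\<close>.\<close>

lemma (in prob_space) expectation_quad_riccati_le:
  fixes C :: "'a \<Rightarrow> real^'n^'n" and S D :: "real^'n^'n"
  assumes S: "sym_posdef S" and C: "integrable M C" "\<And>\<omega>. pos_semidef (C \<omega>)"
    and D: "pos_semidef D" "loewner_le (expectation C) D"
  shows "integrable M (\<lambda>\<omega>. x \<bullet> (riccati S (C \<omega>) *v x))"
    and "expectation (\<lambda>\<omega>. x \<bullet> (riccati S (C \<omega>) *v x)) \<le> x \<bullet> (riccati S D *v x)"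
proof -
  have [measurable]: "C \<in> borel_measurable M"
    using C(1) by simp
  have "(\<lambda>\<omega>. matrix_inv (C \<omega> + S)) \<in> borel_measurable M"
    by (rule borel_measurable_matrix_inv_add[OF _ C(2) S]) simp
  then have "(\<lambda>\<omega>. x \<bullet> (riccati S (C \<omega>) *v x)) \<in> borel_measurable M"
    unfolding riccati_def by measurable
  then show int: "integrable M (\<lambda>\<omega>. x \<bullet> (riccati S (C \<omega>) *v x))"
    using quad_riccati_bounds[OF C(2) S]
    by (intro integrable_const_bound[where B="x \<bullet> (S *v x)"] AE_I2) auto
  define u where "u = matrix_inv (D + S) *v (S *v x)"
  define affine where "affine E = x \<bullet> (S *v x) - 2 * ((S *v x) \<bullet> u) + u \<bullet> (E *v u) + u \<bullet> (S *v u)" for E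
  have affine: "affine E = x \<bullet> (S *v x) - 2 * ((S *v x) \<bullet> u) + u \<bullet> ((E + S) *v u)" for E
    unfolding affine_def by (simp add: matrix_vector_mult_add_rdistrib inner_add_right)
  have "expectation (\<lambda>\<omega>. x \<bullet> (riccati S (C \<omega>) *v x)) \<le> expectation (\<lambda>\<omega>. affine (C \<omega>))"
    using int integrable_quad[OF C(1), of u u] unfolding affine
    by (intro integral_mono quad_riccati_le_affine[OF C(2) S]) (auto simp: affine[symmetric] affine_def)
  also have "\<dots> = affine (expectation C)"
    using integrable_quad[OF C(1), of u u] by (simp add: affine_def quad_integral[OF C(1)] prob_space)
  also have "\<dots> \<le> affine D"
    using D(2) unfolding affine_def loewner_le_def pos_semidef_def
    by (simp add: matrix_vector_mult_diff_rdistrib inner_diff_right)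
  also have "\<dots> = x \<bullet> (riccati S D *v x)"
    unfolding affine by (rule quad_riccati_eq_affine[OF D(1) S u_def, symmetric])
  finally show "expectation (\<lambda>\<omega>. x \<bullet> (riccati S (C \<omega>) *v x)) \<le> x \<bullet> (riccati S D *v x)" .
qed

section \<open>An expectation bound for centred sums\<close>

lemma sum_sq_add_centered:
  fixes a Y :: "nat \<Rightarrow> real"
  assumes "J > 0"
  shows "(\<Sum>j<J. (a j + (Y j - (\<Sum>k<J. Y k) / real J))\<^sup>2)
    = (\<Sum>j<J. (a j)\<^sup>2) + 2 * (\<Sum>j<J. a j * Y j) - 2 / real J * (\<Sum>j<J. \<Sum>k<J. a j * Y k)
      + (\<Sum>j<J. (Y j)\<^sup>2) - 1 / real J * (\<Sum>j<J. \<Sum>k<J. Y j * Y k)"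
proof -
  define T where "T = (\<Sum>k<J. Y k)"
  define A where "A = (\<Sum>k<J. a k)"
  have "(\<Sum>j<J. (a j + (Y j - T / real J))\<^sup>2)
     = (\<Sum>j<J. (a j)\<^sup>2 + 2 * (a j * Y j) + (Y j)\<^sup>2 + T\<^sup>2 / (real J)\<^sup>2 - 2 * T / real J * (a j + Y j))"
    by (intro sum.cong) (auto simp: power2_eq_square field_simps)
  also have "\<dots> = (\<Sum>j<J. (a j)\<^sup>2) + 2 * (\<Sum>j<J. a j * Y j) + (\<Sum>j<J. (Y j)\<^sup>2)
      + real J * (T\<^sup>2 / (real J)\<^sup>2) - 2 * T / real J * (A + T)"
    unfolding A_def T_def
    by (simp add: sum.distrib sum_subtractf sum_distrib_left[symmetric] sum_divide_distrib[symmetric])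
  also have "\<dots> = (\<Sum>j<J. (a j)\<^sup>2) + 2 * (\<Sum>j<J. a j * Y j) - 2 / real J * (A * T)
      + (\<Sum>j<J. (Y j)\<^sup>2) - 1 / real J * (T * T)"
    using assms by (simp add: power2_eq_square field_simps)
  finally show ?thesis
    unfolding A_def T_def by (simp add: sum_product)
qed

lemma integral_double_sum:
  fixes f :: "'i \<Rightarrow> 'j \<Rightarrow> 'a \<Rightarrow> real"
  assumes "\<And>j k. j \<in> A \<Longrightarrow> k \<in> B \<Longrightarrow> integrable M (f j k)"
  shows "(\<integral>\<omega>. (\<Sum>j\<in>A. \<Sum>k\<in>B. f j k \<omega>) \<partial>M) = (\<Sum>j\<in>A. \<Sum>k\<in>B. integral\<^sup>L M (f j k))"
proof -
  have "(\<integral>\<omega>. (\<Sum>j\<in>A. \<Sum>k\<in>B. f j k \<omega>) \<partial>M) = (\<Sum>j\<in>A. \<integral>\<omega>. (\<Sum>k\<in>B. f j k \<omega>) \<partial>M)"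
    using assms by (intro Bochner_Integration.integral_sum Bochner_Integration.integrable_sum) auto
  also have "\<dots> = (\<Sum>j\<in>A. \<Sum>k\<in>B. integral\<^sup>L M (f j k))"
    using assms by (intro sum.cong refl Bochner_Integration.integral_sum) auto
  finally show ?thesis .
qed

lemma expectation_sum_product_uncorrelated:
  fixes Y :: "nat \<Rightarrow> 'a \<Rightarrow> real"
  assumes "\<And>j k. j < J \<Longrightarrow> k < J \<Longrightarrow> integrable M (\<lambda>\<omega>. Y j \<omega> * Y k \<omega>)"
    and "\<And>j k. j < J \<Longrightarrow> k < J \<Longrightarrow> j \<noteq> k \<Longrightarrow> (\<integral>\<omega>. Y j \<omega> * Y k \<omega> \<partial>M) = 0"
  shows "(\<integral>\<omega>. (\<Sum>j<J. \<Sum>k<J. Y j \<omega> * Y k \<omega>) \<partial>M) = (\<Sum>j<J. \<integral>\<omega>. (Y j \<omega>)\<^sup>2 \<partial>M)"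
proof -
  have "(\<integral>\<omega>. (\<Sum>j<J. \<Sum>k<J. Y j \<omega> * Y k \<omega>) \<partial>M) = (\<Sum>j<J. \<Sum>k<J. \<integral>\<omega>. Y j \<omega> * Y k \<omega> \<partial>M)"
    using assms(1) by (intro integral_double_sum) auto
  also have "\<dots> = (\<Sum>j<J. \<Sum>k<J. if k = j then \<integral>\<omega>. (Y j \<omega>)\<^sup>2 \<partial>M else 0)"
    using assms(2) by (intro sum.cong refl) (auto simp: power2_eq_square)
  finally show ?thesis
    by simp
qed

lemma (in prob_space) expectation_sum_sq_add_centered_le:
  fixes a Y :: "nat \<Rightarrow> 'a \<Rightarrow> real"
  assumes J: "J > 0"
    and int_aa: "\<And>j. j < J \<Longrightarrow> integrable M (\<lambda>\<omega>. (a j \<omega>)\<^sup>2)"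
    and int_aY: "\<And>j k. j < J \<Longrightarrow> k < J \<Longrightarrow> integrable M (\<lambda>\<omega>. a j \<omega> * Y k \<omega>)"
    and int_YY: "\<And>j k. j < J \<Longrightarrow> k < J \<Longrightarrow> integrable M (\<lambda>\<omega>. Y j \<omega> * Y k \<omega>)"
    and uncorr_aY: "\<And>j k. j < J \<Longrightarrow> k < J \<Longrightarrow> expectation (\<lambda>\<omega>. a j \<omega> * Y k \<omega>) = 0"
    and uncorr_YY: "\<And>j k. j < J \<Longrightarrow> k < J \<Longrightarrow> j \<noteq> k \<Longrightarrow> expectation (\<lambda>\<omega>. Y j \<omega> * Y k \<omega>) = 0"
    and var_Y: "\<And>j. j < J \<Longrightarrow> expectation (\<lambda>\<omega>. (Y j \<omega>)\<^sup>2) \<le> B"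
  shows "integrable M (\<lambda>\<omega>. \<Sum>j<J. (a j \<omega> + (Y j \<omega> - (\<Sum>k<J. Y k \<omega>) / real J))\<^sup>2)"
    and "expectation (\<lambda>\<omega>. \<Sum>j<J. (a j \<omega> + (Y j \<omega> - (\<Sum>k<J. Y k \<omega>) / real J))\<^sup>2)
      \<le> expectation (\<lambda>\<omega>. \<Sum>j<J. (a j \<omega>)\<^sup>2) + (real J - 1) * B"
proof -
  have int_YY': "integrable M (\<lambda>\<omega>. (Y j \<omega>)\<^sup>2)" if "j < J" for j
    using int_YY[OF that that] by (simp add: power2_eq_square)
  note expand = sum_sq_add_centered[OF J, of "\<lambda>j. a j \<omega>" "\<lambda>j. Y j \<omega>" for \<omega>]
  have I: "integrable M (\<lambda>\<omega>. \<Sum>j<J. (a j \<omega>)\<^sup>2)"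
    "integrable M (\<lambda>\<omega>. \<Sum>j<J. a j \<omega> * Y j \<omega>)"
    "integrable M (\<lambda>\<omega>. \<Sum>j<J. \<Sum>k<J. a j \<omega> * Y k \<omega>)"
    "integrable M (\<lambda>\<omega>. \<Sum>j<J. (Y j \<omega>)\<^sup>2)"
    "integrable M (\<lambda>\<omega>. \<Sum>j<J. \<Sum>k<J. Y j \<omega> * Y k \<omega>)"
    using int_aa int_aY int_YY int_YY' by (auto intro!: Bochner_Integration.integrable_sum)
  then show "integrable M (\<lambda>\<omega>. \<Sum>j<J. (a j \<omega> + (Y j \<omega> - (\<Sum>k<J. Y k \<omega>) / real J))\<^sup>2)"
    unfolding expand by auto
  have "expectation (\<lambda>\<omega>. \<Sum>j<J. \<Sum>k<J. a j \<omega> * Y k \<omega>)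
      = (\<Sum>j<J. \<Sum>k<J. expectation (\<lambda>\<omega>. a j \<omega> * Y k \<omega>))"
    using int_aY by (intro integral_double_sum) auto
  then have E_aY: "expectation (\<lambda>\<omega>. \<Sum>j<J. \<Sum>k<J. a j \<omega> * Y k \<omega>) = 0"
    by (simp add: uncorr_aY)
  have E_aY': "expectation (\<lambda>\<omega>. \<Sum>j<J. a j \<omega> * Y j \<omega>) = 0"
    using int_aY uncorr_aY by (simp add: Bochner_Integration.integral_sum)
  note E_YY = expectation_sum_product_uncorrelated[OF int_YY uncorr_YY]
  have "expectation (\<lambda>\<omega>. \<Sum>j<J. (a j \<omega> + (Y j \<omega> - (\<Sum>k<J. Y k \<omega>) / real J))\<^sup>2)
      = expectation (\<lambda>\<omega>. \<Sum>j<J. (a j \<omega>)\<^sup>2) + (1 - 1 / real J) * (\<Sum>j<J. expectation (\<lambda>\<omega>. (Y j \<omega>)\<^sup>2))"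
    unfolding expand using I E_aY E_aY' E_YY int_YY'
    by (simp add: Bochner_Integration.integral_add Bochner_Integration.integral_diff
        Bochner_Integration.integral_sum algebra_simps)
  also have "\<dots> \<le> expectation (\<lambda>\<omega>. \<Sum>j<J. (a j \<omega>)\<^sup>2) + (1 - 1 / real J) * (\<Sum>j<J. B)"
    using J var_Y by (intro add_left_mono mult_left_mono sum_mono) auto
  also have "\<dots> = expectation (\<lambda>\<omega>. \<Sum>j<J. (a j \<omega>)\<^sup>2) + (real J - 1) * B"
    using J by (simp add: field_simps)
  finally show "expectation (\<lambda>\<omega>. \<Sum>j<J. (a j \<omega> + (Y j \<omega> - (\<Sum>k<J. Y k \<omega>) / real J))\<^sup>2)
      \<le> expectation (\<lambda>\<omega>. \<Sum>j<J. (a j \<omega>)\<^sup>2) + (real J - 1) * B" .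
qed

locale stochastic_eki = prob_space M for M :: "'w measure" +
  fixes H :: "real^'d^'n" and S :: "real^'n^'n" and y :: "real^'n" and J :: nat
    and v0 :: "nat \<Rightarrow> real^'d" and \<epsilon> :: "nat \<Rightarrow> nat \<Rightarrow> 'w \<Rightarrow> real^'n"
  assumes S: "sym_posdef S" and J: "J \<ge> 2"
    and measurable_noise [measurable]: "\<And>i j. \<epsilon> i j \<in> borel_measurable M"
    and indep_noise: "indep_vars (\<lambda>_. borel) (\<lambda>p. \<epsilon> (fst p) (snd p)) {p. snd p < J}"
    and gaussian_noise: "\<And>i j. j < J \<Longrightarrow> distr M borel (\<epsilon> i j) = gaussian S"
begin

definition ens :: "nat \<Rightarrow> 'w \<Rightarrow> nat \<Rightarrow> real^'d" where
  "ens i \<omega> = eki_ens H S y J v0 (\<lambda>i j. \<epsilon> i j \<omega>) i"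

definition past :: "nat \<Rightarrow> (nat \<times> nat) set" where
  "past i = {p. fst p < i \<and> snd p < J}"

definition noise_on :: "(nat \<times> nat) set \<Rightarrow> 'w \<Rightarrow> nat \<times> nat \<Rightarrow> real^'n" where
  "noise_on L \<omega> = restrict (\<lambda>p. \<epsilon> (fst p) (snd p) \<omega>) L"

abbreviation noise_space :: "(nat \<times> nat) set \<Rightarrow> (nat \<times> nat \<Rightarrow> real^'n) measure" where
  "noise_space L \<equiv> PiM L (\<lambda>_. borel)"

definition ens_of_noise :: "nat \<Rightarrow> (nat \<times> nat \<Rightarrow> real^'n) \<Rightarrow> nat \<Rightarrow> real^'d" where
  "ens_of_noise i x = eki_ens H S y J v0 (\<lambda>k l. x (k, l)) i"

lemma ens_Suc: "ens (Suc i) \<omega> = eki_step H S y J (ens i \<omega>) (\<lambda>j. \<epsilon> i j \<omega>)"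
  unfolding ens_def eki_ens_Suc ..

lemma ens_eq_ens_of_noise: "past i \<subseteq> L \<Longrightarrow> j < J \<Longrightarrow> ens i \<omega> j = ens_of_noise i (noise_on L \<omega>) j"
  unfolding ens_def ens_of_noise_def
  by (rule eki_ens_cong) (auto simp: noise_on_def past_def subset_eq)

lemma measurable_noise_on: "noise_on L \<in> measurable M (noise_space L)"
  unfolding noise_on_def by (intro measurable_restrict) simp

lemma measurable_ens_of_noise:
  "past i \<subseteq> L \<Longrightarrow> j < J \<Longrightarrow> (\<lambda>x. ens_of_noise i x j) \<in> borel_measurable (noise_space L)"
proof (induction i arbitrary: j)
  case 0
  then show ?case
    unfolding ens_of_noise_def by simp
next
  case (Suc i)
  have "past i \<subseteq> L" "(i, j) \<in> L"
    using Suc.prems unfolding past_def by auto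
  then have IH: "\<And>l. l < J \<Longrightarrow> (\<lambda>x. ens_of_noise i x l) \<in> borel_measurable (noise_space L)"
    and [measurable]: "(\<lambda>x. x (i, j)) \<in> borel_measurable (noise_space L)"
    using Suc.IH by auto
  have [measurable]: "(\<lambda>x. ens_of_noise i x j) \<in> borel_measurable (noise_space L)"
    and [measurable]: "(\<lambda>x. emp_cov J (ens_of_noise i x)) \<in> borel_measurable (noise_space L)"
    and [measurable]: "(\<lambda>x. matrix_inv (obs_cov H J (ens_of_noise i x) + S)) \<in> borel_measurable (noise_space L)"
    using IH Suc.prems(2)
    by (auto intro!: borel_measurable_emp_cov borel_measurable_matrix_inv_add borel_measurable_obs_cov
        pos_semidef_obs_cov S)
  have "ens_of_noise (Suc i) x j = ens_of_noise i x j
      + (emp_cov J (ens_of_noise i x) ** transpose H ** matrix_inv (obs_cov H J (ens_of_noise i x) + S))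
        *v (y + x (i, j) - H *v ens_of_noise i x j)" for x
    unfolding ens_of_noise_def eki_ens_Suc eki_step_def by simp
  then show ?case
    by simp
qed

text \<open>Functionals of an ensemble that only look at its \<open>J\<close> members and turn measurable
  ensembles into measurable values. Applied to \<open>ens i\<close>, they are measurable functions of the
  perturbations in \<open>past i\<close>.\<close>

definition ens_functional :: "((nat \<Rightarrow> real^'d) \<Rightarrow> 'b::topological_space) \<Rightarrow> bool" where
  "ens_functional g \<longleftrightarrow> (\<forall>v w. (\<forall>j<J. v j = w j) \<longrightarrow> g v = g w) \<and>
     (\<forall>L f. (\<forall>j<J. (\<lambda>x. f x j) \<in> borel_measurable (noise_space L))
        \<longrightarrow> (\<lambda>x. g (f x)) \<in> borel_measurable (noise_space L))"

lemma ens_functionalI: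
  assumes "\<And>v w. (\<And>j. j < J \<Longrightarrow> v j = w j) \<Longrightarrow> g v = g w"
    and "\<And>L f. (\<And>j. j < J \<Longrightarrow> (\<lambda>x. f x j) \<in> borel_measurable (noise_space L))
      \<Longrightarrow> (\<lambda>x. g (f x)) \<in> borel_measurable (noise_space L)"
  shows "ens_functional g"
  unfolding ens_functional_def using assms by blast

lemma ens_functional_past:
  assumes "ens_functional g" and "past i \<subseteq> L"
  shows "g (ens i \<omega>) = g (ens_of_noise i (noise_on L \<omega>))"
    and "(\<lambda>x. g (ens_of_noise i x)) \<in> borel_measurable (noise_space L)"
  using assms ens_eq_ens_of_noise measurable_ens_of_noise unfolding ens_functional_def by blast+

lemma borel_measurable_ens_functional:
  "ens_functional g \<Longrightarrow> (\<lambda>\<omega>. g (ens i \<omega>)) \<in> borel_measurable M"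
  using ens_functional_past[of g i "past i"] measurable_comp[OF measurable_noise_on]
  by (simp add: comp_def)

lemma ens_functional_const: "ens_functional (\<lambda>v. c)"
  by (rule ens_functionalI) simp_all

lemma ens_functional_obs_cov: "ens_functional (obs_cov H J)"
  by (rule ens_functionalI) (simp_all cong: obs_cov_cong add: borel_measurable_obs_cov)

lemma ens_functional_obs_dev: "j < J \<Longrightarrow> ens_functional (\<lambda>v. obs_dev H J v j)"
  by (rule ens_functionalI) (simp_all cong: obs_dev_cong add: borel_measurable_obs_dev)

lemma ens_functional_inverse_obs_cov_add: "ens_functional (\<lambda>v. matrix_inv (obs_cov H J v + S))"
proof (rule ens_functionalI)
  fix L and f :: "(nat \<times> nat \<Rightarrow> real^'n) \<Rightarrow> nat \<Rightarrow> real^'d"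
  assume "\<And>j. j < J \<Longrightarrow> (\<lambda>x. f x j) \<in> borel_measurable (noise_space L)"
  then show "(\<lambda>x. matrix_inv (obs_cov H J (f x) + S)) \<in> borel_measurable (noise_space L)"
    by (intro borel_measurable_matrix_inv_add borel_measurable_obs_cov pos_semidef_obs_cov S)
qed (simp cong: obs_cov_cong)

lemma ens_functional_compose:
  assumes "ens_functional g" "ens_functional h"
    and [measurable]: "(\<lambda>p. \<phi> (fst p) (snd p)) \<in> borel_measurable (borel \<Otimes>\<^sub>M borel)"
  shows "ens_functional (\<lambda>v. \<phi> (g v) (h v))"
proof (rule ens_functionalI)
  show "\<phi> (g v) (h v) = \<phi> (g w) (h w)" if "\<And>j. j < J \<Longrightarrow> v j = w j" for v w
    using assms(1,2) that unfolding ens_functional_def by metis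
  fix L and f :: "(nat \<times> nat \<Rightarrow> real^'n) \<Rightarrow> nat \<Rightarrow> real^'d"
  assume "\<And>j. j < J \<Longrightarrow> (\<lambda>x. f x j) \<in> borel_measurable (noise_space L)"
  then have [measurable]: "(\<lambda>x. g (f x)) \<in> borel_measurable (noise_space L)"
    "(\<lambda>x. h (f x)) \<in> borel_measurable (noise_space L)"
    using assms(1,2) unfolding ens_functional_def by blast+
  show "(\<lambda>x. \<phi> (g (f x)) (h (f x))) \<in> borel_measurable (noise_space L)"
    using measurable_comp[OF measurable_Pair[of "\<lambda>x. g (f x)" _ borel "\<lambda>x. h (f x)" borel]
        assms(3)]
    by (simp add: comp_def)
qed

lemma ens_functional_mult:
  fixes g h :: "(nat \<Rightarrow> real^'d) \<Rightarrow> real"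
  shows "ens_functional g \<Longrightarrow> ens_functional h \<Longrightarrow> ens_functional (\<lambda>v. g v * h v)"
  by (rule ens_functional_compose[of g h "(*)"]) measurable

lemma ens_functional_diff:
  fixes a b :: "(nat \<Rightarrow> real^'d) \<Rightarrow> real^'n"
  shows "ens_functional a \<Longrightarrow> ens_functional b \<Longrightarrow> ens_functional (\<lambda>v. a v - b v)"
  by (rule ens_functional_compose[of a b "(-)"]) measurable

lemma ens_functional_inner:
  fixes a b :: "(nat \<Rightarrow> real^'d) \<Rightarrow> real^'n"
  shows "ens_functional a \<Longrightarrow> ens_functional b \<Longrightarrow> ens_functional (\<lambda>v. a v \<bullet> b v)"
  by (rule ens_functional_compose[of a b "(\<bullet>)"]) measurable

lemma ens_functional_nth:
  fixes a :: "(nat \<Rightarrow> real^'d) \<Rightarrow> real^'n"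
  shows "ens_functional a \<Longrightarrow> ens_functional (\<lambda>v. a v $ c)"
  by (rule ens_functional_compose[of a "\<lambda>v. 0::real" "\<lambda>x _. x $ c"], assumption)
    (rule ens_functional_const, measurable)

lemma ens_functional_vector_matrix_mult:
  fixes a :: "(nat \<Rightarrow> real^'d) \<Rightarrow> real^'n" and A :: "(nat \<Rightarrow> real^'d) \<Rightarrow> real^'m^'n"
  shows "ens_functional a \<Longrightarrow> ens_functional A \<Longrightarrow> ens_functional (\<lambda>v. a v v* A v)"
  by (rule ens_functional_compose[of a A "(v*)"]) measurable

lemma ens_functional_matrix_mult:
  fixes A :: "(nat \<Rightarrow> real^'d) \<Rightarrow> real^'m^'n" and B :: "(nat \<Rightarrow> real^'d) \<Rightarrow> real^'p^'m"
  shows "ens_functional A \<Longrightarrow> ens_functional B \<Longrightarrow> ens_functional (\<lambda>v. A v ** B v)"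
  by (rule ens_functional_compose[of A B "(**)"]) measurable

lemma integrable_ens_functional:
  fixes g :: "(nat \<Rightarrow> real^'d) \<Rightarrow> real"
  assumes "ens_functional g" and "\<And>v. \<bar>g v\<bar> \<le> B"
  shows "integrable M (\<lambda>\<omega>. g (ens i \<omega>))"
  using assms by (intro integrable_const_bound[where B=B] AE_I2 borel_measurable_ens_functional) auto

lemma integrable_ens_functional_sq:
  fixes g :: "(nat \<Rightarrow> real^'d) \<Rightarrow> real"
  assumes "ens_functional g" and "\<And>v. \<bar>g v\<bar> \<le> B"
  shows "integrable M (\<lambda>\<omega>. (g (ens i \<omega>))\<^sup>2)"
proof -
  have "\<bar>g v * g v\<bar> \<le> B * B" for v
    unfolding abs_mult using assms(2)[of v] by (intro mult_mono) (auto intro: order_trans[OF abs_ge_zero])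
  from integrable_ens_functional[OF ens_functional_mult[OF assms(1,1)] this]
  show ?thesis
    by (simp add: power2_eq_square)
qed

lemma expectation_mult_indep_noise:
  fixes f g :: "(nat \<times> nat \<Rightarrow> real^'n) \<Rightarrow> real"
  assumes "A \<inter> B = {}" "A \<subseteq> {p. snd p < J}" "B \<subseteq> {p. snd p < J}"
    and "f \<in> borel_measurable (noise_space A)" "g \<in> borel_measurable (noise_space B)"
    and "integrable M (\<lambda>\<omega>. f (noise_on A \<omega>))" "integrable M (\<lambda>\<omega>. g (noise_on B \<omega>))"
  shows "integrable M (\<lambda>\<omega>. f (noise_on A \<omega>) * g (noise_on B \<omega>))"
    and "expectation (\<lambda>\<omega>. f (noise_on A \<omega>) * g (noise_on B \<omega>))
      = expectation (\<lambda>\<omega>. f (noise_on A \<omega>)) * expectation (\<lambda>\<omega>. g (noise_on B \<omega>))"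
proof -
  have "indep_var (noise_space A) (noise_on A) (noise_space B) (noise_on B)"
    unfolding noise_on_def using indep_var_restrict[OF indep_noise assms(1-3)] by simp
  then have "indep_var borel (f \<circ> noise_on A) borel (g \<circ> noise_on B)"
    by (rule indep_var_compose[OF _ assms(4,5)])
  then show "integrable M (\<lambda>\<omega>. f (noise_on A \<omega>) * g (noise_on B \<omega>))"
    and "expectation (\<lambda>\<omega>. f (noise_on A \<omega>) * g (noise_on B \<omega>))
      = expectation (\<lambda>\<omega>. f (noise_on A \<omega>)) * expectation (\<lambda>\<omega>. g (noise_on B \<omega>))"
    using indep_var_integrable indep_var_lebesgue_integral assms(6,7) by (simp_all add: comp_def)
qed

lemma noise_moments:
  assumes "j < J"
  shows "integrable M (\<lambda>\<omega>. \<epsilon> i j \<omega> $ c)" and "expectation (\<lambda>\<omega>. \<epsilon> i j \<omega> $ c) = 0"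
    and "integrable M (\<lambda>\<omega>. \<epsilon> i j \<omega> $ c * \<epsilon> i j \<omega> $ e)"
    and "expectation (\<lambda>\<omega>. (u \<bullet> \<epsilon> i j \<omega>)\<^sup>2) \<le> u \<bullet> (S *v u)"
proof -
  note moments = gaussian_linear_integrable[OF S measurable_noise gaussian_noise[OF assms]]
    gaussian_linear_mean[OF S measurable_noise gaussian_noise[OF assms]]
    gaussian_linear_second_moment_le[OF S measurable_noise gaussian_noise[OF assms]]
  show "integrable M (\<lambda>\<omega>. \<epsilon> i j \<omega> $ c)" "expectation (\<lambda>\<omega>. \<epsilon> i j \<omega> $ c) = 0"
    using moments(1,3)[of "axis c 1"] by (simp_all add: inner_axis')
  have sq: "integrable M (\<lambda>\<omega>. (\<epsilon> i j \<omega> $ c)\<^sup>2 + (\<epsilon> i j \<omega> $ e)\<^sup>2)"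
    using moments(2)[of "axis c 1"] moments(2)[of "axis e 1"] by (simp add: inner_axis')
  show "integrable M (\<lambda>\<omega>. \<epsilon> i j \<omega> $ c * \<epsilon> i j \<omega> $ e)"
  proof (rule Bochner_Integration.integrable_bound[OF sq])
    have "\<bar>a * b\<bar> \<le> a\<^sup>2 + b\<^sup>2" for a b :: real
      using sum_squares_bound[of a b] sum_squares_bound[of a "- b"] by (simp add: abs_if)
    then show "AE \<omega> in M. norm (\<epsilon> i j \<omega> $ c * \<epsilon> i j \<omega> $ e)
        \<le> norm ((\<epsilon> i j \<omega> $ c)\<^sup>2 + (\<epsilon> i j \<omega> $ e)\<^sup>2)"
      by simp
  qed measurable
  show "expectation (\<lambda>\<omega>. (u \<bullet> \<epsilon> i j \<omega>)\<^sup>2) \<le> u \<bullet> (S *v u)"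
    by (rule moments(4))
qed

lemma expectation_ens_functional_mult_current:
  fixes g :: "(nat \<Rightarrow> real^'d) \<Rightarrow> real" and F :: "(nat \<times> nat \<Rightarrow> real^'n) \<Rightarrow> real"
  assumes g: "ens_functional g" "\<And>v. \<bar>g v\<bar> \<le> B" and j: "j < J"
    and F: "F \<in> borel_measurable (noise_space {(i, j)})" "integrable M (\<lambda>\<omega>. F (noise_on {(i, j)} \<omega>))"
  shows "integrable M (\<lambda>\<omega>. g (ens i \<omega>) * F (noise_on {(i, j)} \<omega>))"
    and "expectation (\<lambda>\<omega>. g (ens i \<omega>) * F (noise_on {(i, j)} \<omega>))
      = expectation (\<lambda>\<omega>. g (ens i \<omega>)) * expectation (\<lambda>\<omega>. F (noise_on {(i, j)} \<omega>))"
proof -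
  have disj: "past i \<inter> {(i, j)} = {}" "past i \<subseteq> {p. snd p < J}" "{(i, j)} \<subseteq> {p. snd p < J}"
    using j unfolding past_def by auto
  note past = ens_functional_past[OF g(1) order.refl]
  note indep = expectation_mult_indep_noise[OF disj past(2) F(1) _ F(2), unfolded past(1)[symmetric]]
  show "integrable M (\<lambda>\<omega>. g (ens i \<omega>) * F (noise_on {(i, j)} \<omega>))"
    and "expectation (\<lambda>\<omega>. g (ens i \<omega>) * F (noise_on {(i, j)} \<omega>))
      = expectation (\<lambda>\<omega>. g (ens i \<omega>)) * expectation (\<lambda>\<omega>. F (noise_on {(i, j)} \<omega>))"
    using indep integrable_ens_functional[OF g] by auto
qed

lemma current_noise_nth:
  "noise_on {(i, j)} \<omega> (i, j) $ c = \<epsilon> i j \<omega> $ c"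
  "(\<lambda>x. x (i, j) $ c) \<in> borel_measurable (noise_space {(i, j)})"
  by (simp_all add: noise_on_def measurable_component_singleton)

lemma expectation_ens_functional_mult_inner_noise:
  fixes g :: "(nat \<Rightarrow> real^'d) \<Rightarrow> real" and \<beta> :: "(nat \<Rightarrow> real^'d) \<Rightarrow> real^'n"
  assumes g: "ens_functional g" "\<And>v. \<bar>g v\<bar> \<le> Bg"
    and \<beta>: "ens_functional \<beta>" "\<And>v. norm (\<beta> v) \<le> B\<beta>" and j: "j < J"
  shows "integrable M (\<lambda>\<omega>. g (ens i \<omega>) * (\<beta> (ens i \<omega>) \<bullet> \<epsilon> i j \<omega>))"
    and "expectation (\<lambda>\<omega>. g (ens i \<omega>) * (\<beta> (ens i \<omega>) \<bullet> \<epsilon> i j \<omega>)) = 0"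
proof -
  have gc: "ens_functional (\<lambda>v. g v * \<beta> v $ c)" "\<bar>g v * \<beta> v $ c\<bar> \<le> Bg * B\<beta>" for c v
    using g \<beta> order_trans[OF component_le_norm_cart \<beta>(2)]
    by (auto intro!: ens_functional_mult ens_functional_nth simp: abs_mult mult_mono')
  note E = expectation_ens_functional_mult_current[OF gc j current_noise_nth(2),
      unfolded current_noise_nth(1), OF noise_moments(1)[OF j]]
  have split: "g v * (\<beta> v \<bullet> e) = (\<Sum>c\<in>UNIV. (g v * \<beta> v $ c) * e $ c)" for v e
    by (simp add: inner_vec_def sum_distrib_left mult_ac)
  show "integrable M (\<lambda>\<omega>. g (ens i \<omega>) * (\<beta> (ens i \<omega>) \<bullet> \<epsilon> i j \<omega>))"
    unfolding split using E(1) by auto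
  show "expectation (\<lambda>\<omega>. g (ens i \<omega>) * (\<beta> (ens i \<omega>) \<bullet> \<epsilon> i j \<omega>)) = 0"
    unfolding split using E noise_moments(2)[OF j] by (simp add: Bochner_Integration.integral_sum)
qed

lemma ens_functional_component_products:
  fixes \<beta> :: "(nat \<Rightarrow> real^'d) \<Rightarrow> real^'n"
  assumes "ens_functional \<beta>" "\<And>v. norm (\<beta> v) \<le> B"
  shows "ens_functional (\<lambda>v. \<beta> v $ c * \<beta> v $ e)" and "\<bar>\<beta> v $ c * \<beta> v $ e\<bar> \<le> B * B"
  using assms order_trans[OF component_le_norm_cart assms(2)]
  by (auto intro!: ens_functional_mult ens_functional_nth simp: abs_mult mult_mono')

lemma expectation_ens_functional_mult_noise_noise:
  fixes g :: "(nat \<Rightarrow> real^'d) \<Rightarrow> real"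
  assumes g: "ens_functional g" "\<And>v. \<bar>g v\<bar> \<le> B" and jk: "j < J" "k < J" "j \<noteq> k"
  shows "integrable M (\<lambda>\<omega>. g (ens i \<omega>) * \<epsilon> i j \<omega> $ c * \<epsilon> i k \<omega> $ e)"
    and "expectation (\<lambda>\<omega>. g (ens i \<omega>) * \<epsilon> i j \<omega> $ c * \<epsilon> i k \<omega> $ e) = 0"
proof -
  define A where "A = past i \<union> {(i, j)}"
  have disj: "A \<inter> {(i, k)} = {}" "A \<subseteq> {p. snd p < J}" "{(i, k)} \<subseteq> {p. snd p < J}"
    using jk unfolding A_def past_def by auto
  have A: "past i \<subseteq> A" "(i, j) \<in> A"
    unfolding A_def by auto
  define f where "f x = g (ens_of_noise i x) * x (i, j) $ c" for x
  have f: "f (noise_on A \<omega>) = g (ens i \<omega>) * \<epsilon> i j \<omega> $ c" for \<omega>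
    using ens_functional_past(1)[OF g(1) A(1)] A(2) by (simp add: f_def noise_on_def)
  have "f \<in> borel_measurable (noise_space A)"
    unfolding f_def
    by (intro borel_measurable_times ens_functional_past(2)[OF g(1) A(1)] borel_measurable_vec_nth
        measurable_component_singleton A(2))
  note indep = expectation_mult_indep_noise[OF disj this current_noise_nth(2), unfolded f
      current_noise_nth(1)]
  show "integrable M (\<lambda>\<omega>. g (ens i \<omega>) * \<epsilon> i j \<omega> $ c * \<epsilon> i k \<omega> $ e)"
    "expectation (\<lambda>\<omega>. g (ens i \<omega>) * \<epsilon> i j \<omega> $ c * \<epsilon> i k \<omega> $ e) = 0"
    using indep expectation_ens_functional_mult_current(1)[OF g jk(1) current_noise_nth(2)]
      noise_moments(1,2)[OF jk(2)] noise_moments(1)[OF jk(1)]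
    by (auto simp: current_noise_nth(1))
qed

lemma expectation_inner_noise_mult_inner_noise:
  fixes \<beta> :: "(nat \<Rightarrow> real^'d) \<Rightarrow> real^'n"
  assumes \<beta>: "ens_functional \<beta>" "\<And>v. norm (\<beta> v) \<le> B"
    and jk: "j < J" "k < J" "j \<noteq> k"
  shows "integrable M (\<lambda>\<omega>. (\<beta> (ens i \<omega>) \<bullet> \<epsilon> i j \<omega>) * (\<beta> (ens i \<omega>) \<bullet> \<epsilon> i k \<omega>))"
    and "expectation (\<lambda>\<omega>. (\<beta> (ens i \<omega>) \<bullet> \<epsilon> i j \<omega>) * (\<beta> (ens i \<omega>) \<bullet> \<epsilon> i k \<omega>)) = 0"
proof -
  note E = expectation_ens_functional_mult_noise_noise[OF ens_functional_component_products[OF \<beta>] jk]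
  have split: "(b \<bullet> x) * (b \<bullet> z) = (\<Sum>c\<in>UNIV. \<Sum>e\<in>UNIV. b $ c * b $ e * x $ c * z $ e)" for b x z :: "real^'n"
    by (simp add: inner_vec_def sum_product mult_ac)
  show "integrable M (\<lambda>\<omega>. (\<beta> (ens i \<omega>) \<bullet> \<epsilon> i j \<omega>) * (\<beta> (ens i \<omega>) \<bullet> \<epsilon> i k \<omega>))"
    unfolding split using E(1) by auto
  show "expectation (\<lambda>\<omega>. (\<beta> (ens i \<omega>) \<bullet> \<epsilon> i j \<omega>) * (\<beta> (ens i \<omega>) \<bullet> \<epsilon> i k \<omega>)) = 0"
    unfolding split using E by (simp add: integral_double_sum)
qed

lemma expectation_inner_noise_sq_le:
  fixes \<beta> :: "(nat \<Rightarrow> real^'d) \<Rightarrow> real^'n"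
  assumes \<beta>: "ens_functional \<beta>" "\<And>v. norm (\<beta> v) \<le> B" and j: "j < J"
  shows "integrable M (\<lambda>\<omega>. (\<beta> (ens i \<omega>) \<bullet> \<epsilon> i j \<omega>)\<^sup>2)"
    and "integrable M (\<lambda>\<omega>. \<beta> (ens i \<omega>) \<bullet> (S *v \<beta> (ens i \<omega>)))"
    and "expectation (\<lambda>\<omega>. (\<beta> (ens i \<omega>) \<bullet> \<epsilon> i j \<omega>)\<^sup>2)
      \<le> expectation (\<lambda>\<omega>. \<beta> (ens i \<omega>) \<bullet> (S *v \<beta> (ens i \<omega>)))"
proof -
  define m where "m c e = expectation (\<lambda>\<omega>. \<epsilon> i j \<omega> $ c * \<epsilon> i j \<omega> $ e)" for c e
  note g = ens_functional_component_products[OF \<beta>]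
  have "(\<lambda>x. x (i, j) $ c * x (i, j) $ e) \<in> borel_measurable (noise_space {(i, j)})" for c e
    by (intro borel_measurable_times current_noise_nth(2))
  note E = expectation_ens_functional_mult_current[OF g j this, unfolded current_noise_nth(1),
      OF noise_moments(3)[OF j]]
  have int_g: "integrable M (\<lambda>\<omega>. \<beta> (ens i \<omega>) $ c * \<beta> (ens i \<omega>) $ e)" for c e
    by (rule integrable_ens_functional[OF g])
  have sq: "(b \<bullet> x)\<^sup>2 = (\<Sum>c\<in>UNIV. \<Sum>e\<in>UNIV. (b $ c * b $ e) * (x $ c * x $ e))" for b x :: "real^'n"
    by (simp add: inner_vec_def power2_eq_square sum_product mult_ac)
  have quad: "b \<bullet> (S *v b) = (\<Sum>c\<in>UNIV. \<Sum>e\<in>UNIV. (b $ c * b $ e) * S $ c $ e)" for b :: "real^'n"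
    by (simp add: inner_vec_def matrix_vector_mult_def sum_distrib_left mult_ac)
  have noise_quad: "(\<Sum>c\<in>UNIV. \<Sum>e\<in>UNIV. (b $ c * b $ e) * m c e) \<le> b \<bullet> (S *v b)" for b :: "real^'n"
  proof -
    have "(\<Sum>c\<in>UNIV. \<Sum>e\<in>UNIV. (b $ c * b $ e) * m c e) = expectation (\<lambda>\<omega>. (b \<bullet> \<epsilon> i j \<omega>)\<^sup>2)"
      unfolding sq m_def using noise_moments(3)[OF j] by (simp add: integral_double_sum)
    then show ?thesis
      using noise_moments(4)[OF j] by simp
  qed
  show "integrable M (\<lambda>\<omega>. (\<beta> (ens i \<omega>) \<bullet> \<epsilon> i j \<omega>)\<^sup>2)"
    unfolding sq using E(1) by auto
  show int_S: "integrable M (\<lambda>\<omega>. \<beta> (ens i \<omega>) \<bullet> (S *v \<beta> (ens i \<omega>)))"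
    unfolding quad using int_g by auto
  have "expectation (\<lambda>\<omega>. (\<beta> (ens i \<omega>) \<bullet> \<epsilon> i j \<omega>)\<^sup>2)
      = (\<Sum>c\<in>UNIV. \<Sum>e\<in>UNIV. expectation (\<lambda>\<omega>. \<beta> (ens i \<omega>) $ c * \<beta> (ens i \<omega>) $ e) * m c e)"
    unfolding sq using E by (simp add: integral_double_sum m_def)
  also have "\<dots> = expectation (\<lambda>\<omega>. \<Sum>c\<in>UNIV. \<Sum>e\<in>UNIV. (\<beta> (ens i \<omega>) $ c * \<beta> (ens i \<omega>) $ e) * m c e)"
    using int_g by (simp add: integral_double_sum)
  also have "\<dots> \<le> expectation (\<lambda>\<omega>. \<beta> (ens i \<omega>) \<bullet> (S *v \<beta> (ens i \<omega>)))"
    using int_g int_S noise_quad by (intro integral_mono) auto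
  finally show "expectation (\<lambda>\<omega>. (\<beta> (ens i \<omega>) \<bullet> \<epsilon> i j \<omega>)\<^sup>2)
      \<le> expectation (\<lambda>\<omega>. \<beta> (ens i \<omega>) \<bullet> (S *v \<beta> (ens i \<omega>)))" .
qed

lemma ens_functional_gain_row: "ens_functional (\<lambda>v. x v* obs_gain H S J v)"
  unfolding obs_gain_def
  by (intro ens_functional_vector_matrix_mult ens_functional_matrix_mult ens_functional_const
      ens_functional_obs_cov ens_functional_inverse_obs_cov_add)

lemma ens_functional_dev_coeff:
  "j < J \<Longrightarrow> ens_functional (\<lambda>v. (x - x v* obs_gain H S J v) \<bullet> obs_dev H J v j)"
  by (intro ens_functional_inner ens_functional_diff ens_functional_const ens_functional_gain_row
      ens_functional_obs_dev)

lemma expectation_sum_sq_add_centered_noise_le: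
  fixes a :: "nat \<Rightarrow> (nat \<Rightarrow> real^'d) \<Rightarrow> real" and \<beta> :: "(nat \<Rightarrow> real^'d) \<Rightarrow> real^'n"
  assumes a: "\<And>j. j < J \<Longrightarrow> ens_functional (a j)" "\<And>j v. j < J \<Longrightarrow> \<bar>a j v\<bar> \<le> Ba"
    and \<beta>: "ens_functional \<beta>" "\<And>v. norm (\<beta> v) \<le> B\<beta>"
  shows "integrable M (\<lambda>\<omega>. \<Sum>j<J. (a j (ens i \<omega>) + (\<beta> (ens i \<omega>) \<bullet> \<epsilon> i j \<omega> - (\<Sum>k<J. \<beta> (ens i \<omega>) \<bullet> \<epsilon> i k \<omega>) / real J))\<^sup>2)"
    and "expectation (\<lambda>\<omega>. \<Sum>j<J. (a j (ens i \<omega>) + (\<beta> (ens i \<omega>) \<bullet> \<epsilon> i j \<omega> - (\<Sum>k<J. \<beta> (ens i \<omega>) \<bullet> \<epsilon> i k \<omega>) / real J))\<^sup>2)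
      \<le> expectation (\<lambda>\<omega>. \<Sum>j<J. (a j (ens i \<omega>))\<^sup>2)
        + (real J - 1) * expectation (\<lambda>\<omega>. \<beta> (ens i \<omega>) \<bullet> (S *v \<beta> (ens i \<omega>)))"
proof -
  define Y where "Y j \<omega> = \<beta> (ens i \<omega>) \<bullet> \<epsilon> i j \<omega>" for j \<omega>
  have aY: "integrable M (\<lambda>\<omega>. a j (ens i \<omega>) * Y k \<omega>)"
    "expectation (\<lambda>\<omega>. a j (ens i \<omega>) * Y k \<omega>) = 0" if "j < J" "k < J" for j k
    unfolding Y_def using expectation_ens_functional_mult_inner_noise[OF a[OF that(1)] \<beta> that(2)] by auto
  have YY: "integrable M (\<lambda>\<omega>. Y j \<omega> * Y k \<omega>)" if "j < J" "k < J" for j k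
    unfolding Y_def using expectation_inner_noise_mult_inner_noise(1)[OF \<beta> that]
      expectation_inner_noise_sq_le(1)[OF \<beta> that(1)]
    by (cases "j = k") (auto simp: power2_eq_square)
  have uncorr_YY: "expectation (\<lambda>\<omega>. Y j \<omega> * Y k \<omega>) = 0" if "j < J" "k < J" "j \<noteq> k" for j k
    unfolding Y_def by (rule expectation_inner_noise_mult_inner_noise(2)[OF \<beta> that])
  have var_Y: "expectation (\<lambda>\<omega>. (Y j \<omega>)\<^sup>2) \<le> expectation (\<lambda>\<omega>. \<beta> (ens i \<omega>) \<bullet> (S *v \<beta> (ens i \<omega>)))"
    if "j < J" for j
    unfolding Y_def by (rule expectation_inner_noise_sq_le(3)[OF \<beta> that])
  show "integrable M (\<lambda>\<omega>. \<Sum>j<J. (a j (ens i \<omega>) + (\<beta> (ens i \<omega>) \<bullet> \<epsilon> i j \<omega> - (\<Sum>k<J. \<beta> (ens i \<omega>) \<bullet> \<epsilon> i k \<omega>) / real J))\<^sup>2)"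
    and "expectation (\<lambda>\<omega>. \<Sum>j<J. (a j (ens i \<omega>) + (\<beta> (ens i \<omega>) \<bullet> \<epsilon> i j \<omega> - (\<Sum>k<J. \<beta> (ens i \<omega>) \<bullet> \<epsilon> i k \<omega>) / real J))\<^sup>2)
      \<le> expectation (\<lambda>\<omega>. \<Sum>j<J. (a j (ens i \<omega>))\<^sup>2)
        + (real J - 1) * expectation (\<lambda>\<omega>. \<beta> (ens i \<omega>) \<bullet> (S *v \<beta> (ens i \<omega>)))"
    using expectation_sum_sq_add_centered_le[where a="\<lambda>j \<omega>. a j (ens i \<omega>)",
        OF _ integrable_ens_functional_sq[OF a] aY(1) YY aY(2) uncorr_YY var_Y] J
    unfolding Y_def by auto
qed

lemma expectation_quad_obs_cov_Suc_le:
  shows "integrable M (\<lambda>\<omega>. x \<bullet> (obs_cov H J (ens (Suc i) \<omega>) *v x))"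
    and "expectation (\<lambda>\<omega>. x \<bullet> (obs_cov H J (ens (Suc i) \<omega>) *v x))
      \<le> expectation (\<lambda>\<omega>. x \<bullet> (riccati S (obs_cov H J (ens i \<omega>)) *v x))"
proof -
  define b where "b v = x v* obs_gain H S J v" for v
  define a where "a j v = (x - b v) \<bullet> obs_dev H J v j" for j v
  have J0: "J > 0" and J1: "real J - 1 > 0"
    using J by auto
  have b: "ens_functional b" "norm (b v) \<le> (\<Sum>c\<in>UNIV. sqrt ((x \<bullet> (S *v x)) * matrix_inv S $ c $ c))" for v
    using ens_functional_gain_row order_trans[OF norm_le_l1_cart sum_mono[OF abs_le_sqrt[OF
          obs_gain_bounds(3)[OF S J]]]]
    unfolding b_def by auto
  have a: "ens_functional (a j)" "\<bar>a j v\<bar> \<le> sqrt ((real J - 1) * (x \<bullet> (S *v x)))" if "j < J" for j v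
    unfolding a_def b_def using ens_functional_dev_coeff abs_le_sqrt[OF obs_gain_bounds(1)[OF S J]] that
    by auto
  note centered = expectation_sum_sq_add_centered_noise_le[OF a b, where i=i]
  have step: "x \<bullet> (obs_cov H J (ens (Suc i) \<omega>) *v x) = (\<Sum>j<J. (a j (ens i \<omega>)
      + (b (ens i \<omega>) \<bullet> \<epsilon> i j \<omega> - (\<Sum>k<J. b (ens i \<omega>) \<bullet> \<epsilon> i k \<omega>) / real J))\<^sup>2) / (real J - 1)" for \<omega>
    unfolding ens_Suc quad_obs_cov_eki_step[OF J0] a_def b_def[symmetric]
    by (simp add: ens_mean_def inner_diff_right inner_sum_right)
  have ric: "x \<bullet> (riccati S (obs_cov H J (ens i \<omega>)) *v x)
      = (\<Sum>j<J. (a j (ens i \<omega>))\<^sup>2) / (real J - 1) + b (ens i \<omega>) \<bullet> (S *v b (ens i \<omega>))" for \<omega>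
    unfolding quad_riccati_obs_cov[OF S] a_def b_def by simp
  show "integrable M (\<lambda>\<omega>. x \<bullet> (obs_cov H J (ens (Suc i) \<omega>) *v x))"
    unfolding step using centered(1) by simp
  have "expectation (\<lambda>\<omega>. x \<bullet> (obs_cov H J (ens (Suc i) \<omega>) *v x))
      \<le> (expectation (\<lambda>\<omega>. \<Sum>j<J. (a j (ens i \<omega>))\<^sup>2)
        + (real J - 1) * expectation (\<lambda>\<omega>. b (ens i \<omega>) \<bullet> (S *v b (ens i \<omega>)))) / (real J - 1)"
    unfolding step using centered(2) J1 by (simp add: divide_right_mono)
  also have "\<dots> = expectation (\<lambda>\<omega>. x \<bullet> (riccati S (obs_cov H J (ens i \<omega>)) *v x))"
  proof -
    have "integrable M (\<lambda>\<omega>. \<Sum>j<J. (a j (ens i \<omega>))\<^sup>2)"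
      using integrable_ens_functional_sq[OF a] by auto
    then show ?thesis
      unfolding ric using expectation_inner_noise_sq_le(2)[OF b J0] J1 by (simp add: add_divide_distrib)
  qed
  finally show "expectation (\<lambda>\<omega>. x \<bullet> (obs_cov H J (ens (Suc i) \<omega>) *v x))
      \<le> expectation (\<lambda>\<omega>. x \<bullet> (riccati S (obs_cov H J (ens i \<omega>)) *v x))" .
qed

lemma expectation_obs_cov_loewner_le:
  "integrable M (\<lambda>\<omega>. obs_cov H J (ens i \<omega>))
    \<and> loewner_le (expectation (\<lambda>\<omega>. obs_cov H J (ens i \<omega>))) (Cseq H S (emp_cov J v0) i)"
proof (induction i)
  case 0
  have "ens 0 \<omega> = v0" for \<omega>
    by (simp add: ens_def)
  then show ?case
    by (simp add: prob_space loewner_le_def pos_semidef_def obs_cov_def transpose_def vec_eq_iff)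
next
  case (Suc i)
  define C where "C \<omega> = obs_cov H J (ens i \<omega>)" for \<omega>
  define C' where "C' \<omega> = obs_cov H J (ens (Suc i) \<omega>)" for \<omega>
  define Cd where "Cd = Cseq H S (emp_cov J v0) i"
  have int_C: "integrable M C" and le: "loewner_le (expectation C) Cd"
    using Suc.IH unfolding C_def Cd_def by auto
  note step = expectation_quad_obs_cov_Suc_le[of _ i, folded C_def C'_def]
  have sym: "transpose (C' \<omega>) = C' \<omega>" for \<omega>
    using pos_semidef_obs_cov unfolding C'_def pos_semidef_def by blast
  have int_C': "integrable M C'"
    by (rule integrable_sym_matrixI[OF step(1) sym])
  have Cd: "pos_semidef Cd"
    unfolding Cd_def by (rule Cseq_pos_semidef[OF S])
  have "x \<bullet> (expectation C' *v x) \<le> x \<bullet> (riccati S Cd *v x)" for x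
  proof -
    have "x \<bullet> (expectation C' *v x) = expectation (\<lambda>\<omega>. x \<bullet> (C' \<omega> *v x))"
      by (rule quad_integral[OF int_C'])
    also have "\<dots> \<le> expectation (\<lambda>\<omega>. x \<bullet> (riccati S (C \<omega>) *v x))"
      by (rule step(2))
    also have "\<dots> \<le> x \<bullet> (riccati S Cd *v x)"
      using pos_semidef_obs_cov unfolding C_def
      by (intro expectation_quad_riccati_le(2)[OF S int_C[unfolded C_def] _ Cd le[unfolded C_def]])
    finally show ?thesis .
  qed
  then have "loewner_le (expectation C') (riccati S Cd)"
    using transpose_integral_sym[OF int_C' sym] pos_semidef_riccati[OF Cd S]
    by (intro loewner_leI) (auto simp: pos_semidef_def)
  then show ?case
    using int_C' unfolding C'_def Cd_def Cseq_Suc_riccati by simp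
qed

end

theorem propositionA1:
  fixes H :: "real^'d^'n" and S :: "real^'n^'n" and y :: "real^'n"
    and J :: nat and v0 :: "nat \<Rightarrow> real^'d"
    and M :: "'w measure" and \<epsilon> :: "nat \<Rightarrow> nat \<Rightarrow> 'w \<Rightarrow> real^'n"
  assumes "sym_posdef S"
    and "J \<ge> 2"
    and "prob_space M"
    and "\<And>i j. \<epsilon> i j \<in> borel_measurable M"
    and "prob_space.indep_vars M (\<lambda>_. borel) (\<lambda>p. \<epsilon> (fst p) (snd p)) {p. snd p < J}"
    and "\<And>i j. j < J \<Longrightarrow> distr M borel (\<epsilon> i j) = gaussian S"
  shows "\<forall>i. integrable M (\<lambda>\<omega>. H ** emp_cov J (eki_ens H S y J v0 (\<lambda>i j. \<epsilon> i j \<omega>) i) ** transpose H)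
           \<and> loewner_le
               (integral\<^sup>L M (\<lambda>\<omega>. H ** emp_cov J (eki_ens H S y J v0 (\<lambda>i j. \<epsilon> i j \<omega>) i) ** transpose H))
               (Cseq H S (emp_cov J v0) i)"
proof -
  interpret stochastic_eki M H S y J v0 \<epsilon>
    using assms unfolding stochastic_eki_def stochastic_eki_axioms_def by blast
  show ?thesis
    using expectation_obs_cov_loewner_le unfolding obs_cov_def ens_def by blast
qed

end
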